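(* For every $n\ge1$, \[G_n(x)=\sum_{\Gamma\in\mathcal{G}^\bullet_n}x^{\mathrm{unl}(\Gamma)},\qquad H_n(x)=\sum_{\Gamma\in\mathcal{G}_n}x^{\mathrm{unl}(\Gamma)}.\]
   Context: The polynomials $G_n,H_n$ are defined by $G_1=H_1=1$, $G_{n+1}(x)=(2n+nx)G_n(x)+(1+x)^2G_n'(x)$ and $H_{n+1}(x)=(2n-1+(n-1)x)H_n(x)+(1+x)^2H_n'(x)$. A Greg tree of size $n$ is a finite tree in which $n$ vertices carry the distinct labels $1,\dots,n$, all other vertices are unlabeled, and every unlabeled vertex has degree at least $3$; two Greg trees are identified if there is a tree isomorphism between them preserving labels. $\mathcal{G}_n$ is the (finite) set of Greg trees of size $n$. A rooted Greg tree of size $n$ is a tree with $n$ vertices labeled $1,\dots,n$, other vertices unlabeled, and a distinguished vertex (the root), such that every unlabeled non-root vertex has degree at least $3$ and, if the root is unlabeled, it has degree at least $2$; identified up to isomorphisms preserving labels and root. $\mathcal{G}^\bullet_n$ is the set of rooted Greg trees of size $n$. For a (rooted) Greg tree $\Gamma$, $\mathrm{unl}(\Gamma)$ is its number of unlabeled vertices. *)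

theory Defs
  imports "HOL-Computational_Algebra.Polynomial"
begin

(* The polynomials G_n, H_n (index n >= 1; the value at 0 is an irrelevant default). *)
fun G :: "nat \<Rightarrow> int poly" where
  "G 0 = 0"
| "G (Suc 0) = 1"
| "G (Suc (Suc m)) =
     [:2 * int (Suc m), int (Suc m):] * G (Suc m) + [:1, 1:] ^ 2 * pderiv (G (Suc m))"

fun H :: "nat \<Rightarrow> int poly" where
  "H 0 = 0"
| "H (Suc 0) = 1"
| "H (Suc (Suc m)) =
     [:2 * int (Suc m) - 1, int (Suc m) - 1:] * H (Suc m) + [:1, 1:] ^ 2 * pderiv (H (Suc m))"

(* Concrete trees: vertex set {0..<n+k}; vertex i < n carries label i+1,
   vertices n..<n+k are the k unlabeled vertices. Edges are 2-element sets. *)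
definition verts :: "nat \<Rightarrow> nat \<Rightarrow> nat set" where
  "verts n k = {0..<n+k}"

definition adj :: "nat set set \<Rightarrow> nat \<Rightarrow> nat \<Rightarrow> bool" where
  "adj E u v \<longleftrightarrow> u \<noteq> v \<and> {u, v} \<in> E"

definition deg :: "nat set set \<Rightarrow> nat \<Rightarrow> nat" where
  "deg E v = card {e \<in> E. v \<in> e}"

definition is_tree :: "nat set \<Rightarrow> nat set set \<Rightarrow> bool" where
  "is_tree V E \<longleftrightarrow> finite V \<and> V \<noteq> {} \<and>
     (\<forall>e\<in>E. \<exists>u v. e = {u, v} \<and> u \<noteq> v \<and> u \<in> V \<and> v \<in> V) \<and>
     (\<forall>u\<in>V. \<forall>v\<in>V. (adj E)\<^sup>*\<^sup>* u v) \<and>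
     card E + 1 = card V"

definition greg_raw :: "nat \<Rightarrow> (nat \<times> nat set set) set" where
  "greg_raw n = {(k, E). is_tree (verts n k) E \<and> (\<forall>v\<in>{n..<n+k}. deg E v \<ge> 3)}"

definition rgreg_raw :: "nat \<Rightarrow> (nat \<times> nat set set \<times> nat) set" where
  "rgreg_raw n = {(k, E, r). is_tree (verts n k) E \<and> r \<in> verts n k \<and>
      (\<forall>v\<in>{n..<n+k}. v \<noteq> r \<longrightarrow> deg E v \<ge> 3) \<and>
      (r \<ge> n \<longrightarrow> deg E r \<ge> 2)}"

definition lab_iso :: "nat \<Rightarrow> nat \<Rightarrow> nat set set \<Rightarrow> nat set set \<Rightarrow> (nat \<Rightarrow> nat) \<Rightarrow> bool" where
  "lab_iso n k E E' f \<longleftrightarrow> bij_betw f (verts n k) (verts n k) \<and> (\<forall>i<n. f i = i) \<and>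
      E' = (\<lambda>e. f ` e) ` E"

definition greg_rel :: "nat \<Rightarrow> ((nat \<times> nat set set) \<times> (nat \<times> nat set set)) set" where
  "greg_rel n = {((k, E), (k', E')). (k, E) \<in> greg_raw n \<and> (k', E') \<in> greg_raw n \<and>
      k = k' \<and> (\<exists>f. lab_iso n k E E' f)}"

definition rgreg_rel :: "nat \<Rightarrow> ((nat \<times> nat set set \<times> nat) \<times> (nat \<times> nat set set \<times> nat)) set" where
  "rgreg_rel n = {((k, E, r), (k', E', r')). (k, E, r) \<in> rgreg_raw n \<and> (k', E', r') \<in> rgreg_raw n \<and>
      k = k' \<and> (\<exists>f. lab_iso n k E E' f \<and> f r = r')}"

definition greg_trees :: "nat \<Rightarrow> (nat \<times> nat set set) set set" where
  "greg_trees n = greg_raw n // greg_rel n"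

definition rooted_greg_trees :: "nat \<Rightarrow> (nat \<times> nat set set \<times> nat) set set" where
  "rooted_greg_trees n = rgreg_raw n // rgreg_rel n"

definition unl :: "(nat \<times> 'a) set \<Rightarrow> nat" where
  "unl C = the_elem (fst ` C)"

end

theory Submission
  imports Defs "HOL-Combinatorics.Permutations"
begin

text \<open>Compare exponential coefficients \<open>k! [x\<^sup>k]\<close>. Give the \<open>k\<close> unlabelled vertices
  of a Greg tree of size \<open>n\<close> the extra names \<open>n+1, \<dots>, n+k\<close>. A tree automorphism fixing all
  leaves is trivial and every leaf of a Greg tree is labelled, so the symmetric group on these
  names acts freely, and \<open>k!\<close> times the number of Greg trees with \<open>k\<close> unlabelled vertices is the
  number \<open>t(n, k)\<close> of named ones (similarly for rooted trees).
  Adding the label \<open>n+1\<close> and sorting by its degree gives a recurrence for \<open>t\<close>: a leaf hangs from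
  the root of a rooted Greg tree on the other vertices, a vertex of degree 2 subdivides an edge,
  and a vertex of degree at least 3 could as well be unlabelled. Since multiplication by \<open>x\<close>
  and differentiation shift exponential coefficients, this is the defining recurrence of \<open>H\<^sub>n\<close>,
  and that of \<open>G\<^sub>n\<close> follows for the rooted counts.\<close>

section \<open>Simple graphs and trees\<close>

abbreviation reach :: "nat set set \<Rightarrow> nat \<Rightarrow> nat \<Rightarrow> bool" where
  "reach E \<equiv> (adj E)\<^sup>*\<^sup>*"

definition simple_edges :: "nat set \<Rightarrow> nat set set \<Rightarrow> bool" where
  "simple_edges V E \<longleftrightarrow> (\<forall>e\<in>E. \<exists>u v. e = {u,v} \<and> u \<noteq> v \<and> u \<in> V \<and> v \<in> V)"

definition connected_on :: "nat set \<Rightarrow> nat set set \<Rightarrow> bool" where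
  "connected_on V E \<longleftrightarrow> (\<forall>u\<in>V. \<forall>v\<in>V. reach E u v)"

definition nbrs :: "nat set set \<Rightarrow> nat \<Rightarrow> nat set" where
  "nbrs E v = {w. adj E v w}"

lemma is_tree_iff:
  "is_tree V E \<longleftrightarrow> finite V \<and> V \<noteq> {} \<and> simple_edges V E \<and> connected_on V E \<and> card E + 1 = card V"
  by (simp add: is_tree_def simple_edges_def connected_on_def)

lemma adj_sym: "adj E u v \<Longrightarrow> adj E v u"
  by (auto simp: adj_def insert_commute)

lemma adj_irrefl [simp]: "\<not> adj E u u"
  by (simp add: adj_def)

lemma adj_insert: "adj (insert e E) u w \<longleftrightarrow> adj E u w \<or> (u \<noteq> w \<and> e = {u,w})"
  by (auto simp: adj_def)

lemma adj_diff: "adj (E - S) u w \<longleftrightarrow> adj E u w \<and> {u,w} \<notin> S"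
  by (auto simp: adj_def)

lemma nbrs_not_self: "a \<notin> nbrs E a"
  by (simp add: nbrs_def)

lemma simple_edges_subset_Pow: "simple_edges V E \<Longrightarrow> E \<subseteq> Pow V"
  by (auto simp: simple_edges_def)

lemma finite_simple_edges: "finite V \<Longrightarrow> simple_edges V E \<Longrightarrow> finite E"
  using simple_edges_subset_Pow finite_subset by blast

lemma adj_in_verts: "simple_edges V E \<Longrightarrow> adj E u v \<Longrightarrow> u \<in> V \<and> v \<in> V"
  using simple_edges_subset_Pow unfolding adj_def by blast

lemma nbrs_subset: "simple_edges V E \<Longrightarrow> nbrs E v \<subseteq> V"
  using adj_in_verts by (auto simp: nbrs_def)

lemma simple_edge_at: "simple_edges V E \<Longrightarrow> e \<in> E \<Longrightarrow> v \<in> e \<Longrightarrow> \<exists>w. e = {v,w} \<and> v \<noteq> w"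
  unfolding simple_edges_def by (metis doubleton_eq_iff insertE singletonD)

lemma edges_at_eq:
  assumes "simple_edges V E"
  shows "{e\<in>E. a\<in>e} = (\<lambda>z. {a,z}) ` nbrs E a"
proof
  show "(\<lambda>z. {a,z}) ` nbrs E a \<subseteq> {e\<in>E. a\<in>e}"
    by (auto simp: nbrs_def adj_def)
  show "{e\<in>E. a\<in>e} \<subseteq> (\<lambda>z. {a,z}) ` nbrs E a"
  proof
    fix e assume "e \<in> {e\<in>E. a\<in>e}"
    then obtain w where "e = {a,w}" "a \<noteq> w" "e \<in> E"
      using simple_edge_at[OF assms] by blast
    then show "e \<in> (\<lambda>z. {a,z}) ` nbrs E a"
      by (auto simp: nbrs_def adj_def)
  qed
qed

lemma deg_eq_card_nbrs:
  assumes "simple_edges V E"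
  shows "deg E v = card (nbrs E v)"
proof -
  have "inj_on (\<lambda>w. {v,w}) (nbrs E v)"
    by (auto simp: inj_on_def nbrs_def adj_def doubleton_eq_iff)
  then show ?thesis
    unfolding deg_def edges_at_eq[OF assms] by (simp add: card_image)
qed

lemma sum_deg_eq:
  assumes fin: "finite V" and E: "simple_edges V E"
  shows "(\<Sum>v\<in>V. deg E v) = 2 * card E"
proof -
  have finE: "finite E"
    using finite_simple_edges[OF fin E] .
  have "(\<Sum>v\<in>V. deg E v) = (\<Sum>v\<in>V. \<Sum>e\<in>E. if v \<in> e then 1 else 0)"
    unfolding deg_def by (rule sum.cong[OF refl]) (simp add: sum.inter_filter[OF finE, symmetric])
  also have "\<dots> = (\<Sum>e\<in>E. \<Sum>v\<in>V. if v \<in> e then 1 else 0)"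
    by (rule sum.swap)
  also have "\<dots> = (\<Sum>e\<in>E. (2::nat))"
  proof (rule sum.cong[OF refl])
    fix e assume "e \<in> E"
    then obtain u w where "e = {u,w}" "u \<noteq> w" "u \<in> V" "w \<in> V"
      using E unfolding simple_edges_def by blast
    then have "{v\<in>V. v \<in> e} = e" "card e = 2" by auto
    then show "(\<Sum>v\<in>V. if v \<in> e then 1 else 0) = (2::nat)"
      using sum.inter_filter[OF fin, of "\<lambda>_. 1::nat" "\<lambda>v. v \<in> e"] by simp
  qed
  finally show ?thesis by simp
qed

lemma reach_if_adj_reach:
  assumes "\<And>u w. adj E1 u w \<Longrightarrow> reach E2 u w" and "reach E1 u v"
  shows "reach E2 u v"
  using assms(2) by induction (auto intro: rtranclp_trans assms(1))

lemma reach_mono: "E1 \<subseteq> E2 \<Longrightarrow> reach E1 u v \<Longrightarrow> reach E2 u v"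
  by (erule reach_if_adj_reach[rotated]) (auto simp: adj_def intro!: r_into_rtranclp)

text \<open>Induction along the walk; while the walk sits at \<open>a\<close>, the invariant records a neighbour of
  \<open>a\<close> already reached in \<open>F\<close>.\<close>

lemma reach_avoiding:
  assumes F: "{e\<in>E. a\<notin>e} \<subseteq> F"
    and nb: "\<And>x y. adj E a x \<Longrightarrow> adj E a y \<Longrightarrow> reach F x y"
    and r: "reach E u w" and ua: "u \<noteq> a" and wa: "w \<noteq> a"
  shows "reach F u w"
proof -
  have "(w \<noteq> a \<longrightarrow> reach F u w) \<and> (w = a \<longrightarrow> (\<exists>x. adj E a x \<and> reach F u x))"
    using r
  proof induction
    case base
    then show ?case using ua by auto
  next
    case (step y z)
    show ?case
    proof (cases "y = a")
      case True
      then obtain x where x: "adj E a x" "reach F u x"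
        using step by auto
      have "z \<noteq> a" "adj E a z"
        using step True by auto
      then show ?thesis
        using nb[OF x(1)] x(2) by (auto intro: rtranclp_trans)
    next
      case False
      then have ry: "reach F u y"
        using step by auto
      show ?thesis
      proof (cases "z = a")
        case True
        then show ?thesis using ry step adj_sym by blast
      next
        case False
        then have "adj F y z"
          using F step(2) \<open>y \<noteq> a\<close> by (auto simp: adj_def)
        then show ?thesis using ry False by auto
      qed
    qed
  qed
  then show ?thesis using wa by blast
qed

text \<open>Every vertex other than \<open>x\<close> is joined to a neighbour strictly closer to \<open>x\<close>; these
  edges are pairwise distinct.\<close>

lemma connected_card_verts_le:
  assumes fin: "finite V" and E: "simple_edges V E" and c: "connected_on V E" and x: "x \<in> V"
  shows "card V \<le> card E + 1"
proof -
  define d where "d v = (LEAST m. (adj E ^^ m) v x)" for v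
  have dd: "(adj E ^^ d v) v x" if "v \<in> V" for v
  proof -
    have "\<exists>m. (adj E ^^ m) v x"
      using c that x by (simp add: connected_on_def rtranclp_power)
    then show ?thesis unfolding d_def by (rule LeastI_ex)
  qed
  have closer: "\<exists>y. adj E v y \<and> d y < d v" if vV: "v \<in> V" and vx: "v \<noteq> x" for v
  proof -
    have "d v \<noteq> 0"
      using dd[OF vV] vx by (metis relpowp_0_E)
    then obtain m where m: "d v = Suc m"
      by (cases "d v") auto
    then obtain y where y: "adj E v y" "(adj E ^^ m) y x"
      using dd[OF vV] relpowp_Suc_D2 by metis
    have "d y \<le> m"
      unfolding d_def using y(2) by (rule Least_le)
    then show ?thesis using y m by auto
  qed
  define f where "f v = (SOME y. adj E v y \<and> d y < d v)" for v
  have f: "adj E v (f v) \<and> d (f v) < d v" if "v \<in> V" "v \<noteq> x" for v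
    unfolding f_def using closer[OF that] by (rule someI_ex)
  have "inj_on (\<lambda>v. {v, f v}) (V - {x})"
  proof (rule inj_onI)
    fix v w assume v: "v \<in> V - {x}" and w: "w \<in> V - {x}" and eq: "{v, f v} = {w, f w}"
    show "v = w"
    proof (rule ccontr)
      assume "v \<noteq> w"
      then have "v = f w" "w = f v"
        using eq by (auto simp: doubleton_eq_iff)
      then show False using f[of v] f[of w] v w by auto
    qed
  qed
  moreover have "(\<lambda>v. {v, f v}) ` (V - {x}) \<subseteq> E"
    using f by (auto simp: adj_def)
  ultimately have "card (V - {x}) \<le> card E"
    using card_inj_on_le finite_simple_edges[OF fin E] by blast
  then show ?thesis
    using x fin by (simp add: card_Diff_singleton)
qed

lemma tree_simple_edges: "is_tree V E \<Longrightarrow> simple_edges V E"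
  by (simp add: is_tree_iff)

lemma tree_finite: "is_tree V E \<Longrightarrow> finite V"
  by (simp add: is_tree_iff)

lemma tree_finite_edges: "is_tree V E \<Longrightarrow> finite E"
  using finite_simple_edges tree_simple_edges tree_finite by blast

lemma tree_card_edges: "is_tree V E \<Longrightarrow> card E = card V - 1"
  unfolding is_tree_iff by auto

lemma tree_card_pos: "is_tree V E \<Longrightarrow> card V \<ge> 1"
  unfolding is_tree_iff by auto

lemma tree_deg_eq: "is_tree V E \<Longrightarrow> deg E v = card (nbrs E v)"
  using deg_eq_card_nbrs tree_simple_edges by blast

lemma tree_finite_nbrs: "is_tree V E \<Longrightarrow> finite (nbrs E v)"
  using nbrs_subset tree_simple_edges tree_finite finite_subset by metis

lemma tree_deg_pos:
  assumes T: "is_tree V E" and aV: "a \<in> V" and c: "card V \<ge> 2"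
  shows "deg E a \<ge> 1"
proof -
  obtain w where w: "w \<in> V" "w \<noteq> a"
    using c card_le_Suc0_iff_eq[OF tree_finite[OF T]] by (metis aV not_less_eq_eq numeral_2_eq_2)
  have "reach E a w"
    using T aV w by (auto simp: is_tree_iff connected_on_def)
  then have "nbrs E a \<noteq> {}"
    using w(2) by (metis converse_rtranclpE empty_Collect_eq nbrs_def)
  then show ?thesis
    using tree_deg_eq[OF T] tree_finite_nbrs[OF T] by (simp add: Suc_leI card_gt_0_iff)
qed

lemma tree_has_leaf:
  assumes T: "is_tree V E" and c: "card V \<ge> 2"
  shows "\<exists>l\<in>V. deg E l = 1"
proof (rule ccontr)
  assume "\<not> ?thesis"
  then have "\<forall>v\<in>V. deg E v \<ge> 2"
    using tree_deg_pos[OF T _ c] by (metis One_nat_def Suc_1 Suc_le_eq le_neq_implies_less)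
  then have "(\<Sum>v\<in>V. 2) \<le> (\<Sum>v\<in>V. deg E v)"
    by (intro sum_mono) auto
  then have "2 * card V \<le> 2 * card E"
    using sum_deg_eq[OF tree_finite[OF T] tree_simple_edges[OF T]] by simp
  then show False using T by (simp add: is_tree_iff)
qed

section \<open>Deleting a leaf, subdividing an edge, smoothing a vertex\<close>

definition del_vertex :: "nat \<Rightarrow> nat set set \<Rightarrow> nat set set" where
  "del_vertex a E = {e\<in>E. a \<notin> e}"

definition subdivide :: "nat \<Rightarrow> nat set \<Rightarrow> nat set set \<Rightarrow> nat set set" where
  "subdivide a e E = (\<lambda>z. {a,z}) ` e \<union> (E - {e})"

definition smooth :: "nat \<Rightarrow> nat set set \<Rightarrow> nat set set" where
  "smooth a E = insert (nbrs E a) (del_vertex a E)"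

lemma simple_edges_del_vertex: "simple_edges V E \<Longrightarrow> simple_edges (V - {a}) (del_vertex a E)"
  unfolding simple_edges_def del_vertex_def by fastforce

lemma del_vertex_outside: "simple_edges V E \<Longrightarrow> a \<notin> V \<Longrightarrow> del_vertex a E = E"
  using simple_edges_subset_Pow by (fastforce simp: del_vertex_def)

lemma nbrs_del_vertex: "w \<noteq> a \<Longrightarrow> nbrs (del_vertex a E) w = nbrs E w - {a}"
  by (auto simp: nbrs_def adj_def del_vertex_def)

lemma nbrs_insert_other: "w \<notin> e \<Longrightarrow> nbrs (insert e E) w = nbrs E w"
  by (auto simp: nbrs_def adj_def)

lemma nbrs_insert_edge: "a \<noteq> r \<Longrightarrow> nbrs (insert {a,r} E) r = insert a (nbrs E r)"
  by (auto simp: nbrs_def adj_def insert_commute)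

lemma card_del_vertex:
  assumes "simple_edges V E" and "finite E"
  shows "card (del_vertex a E) + card (nbrs E a) = card E"
proof -
  have "del_vertex a E = E - {e\<in>E. a\<in>e}"
    by (auto simp: del_vertex_def)
  moreover have "card {e\<in>E. a\<in>e} = card (nbrs E a)"
    using deg_eq_card_nbrs[OF assms(1)] by (simp add: deg_def)
  moreover have "card {e\<in>E. a\<in>e} \<le> card E"
    using assms(2) by (intro card_mono) auto
  ultimately show ?thesis
    using assms(2) by (simp add: card_Diff_subset)
qed

lemma connected_on_avoiding:
  assumes c: "connected_on V E" and F: "{e\<in>E. a\<notin>e} \<subseteq> F"
    and nb: "\<And>x y. x \<in> nbrs E a \<Longrightarrow> y \<in> nbrs E a \<Longrightarrow> reach F x y"
  shows "connected_on (V - {a}) F"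
  unfolding connected_on_def
proof (intro ballI)
  fix u w assume "u \<in> V - {a}" "w \<in> V - {a}"
  then show "reach F u w"
    using reach_avoiding[OF F _ _] nb c by (auto simp: nbrs_def connected_on_def)
qed

lemma is_tree_del_leaf:
  assumes T: "is_tree V E" and aV: "a \<in> V" and N: "nbrs E a = {v}"
  shows "is_tree (V - {a}) (del_vertex a E)"
proof -
  have E: "simple_edges V E" and fin: "finite V" and ce: "card E + 1 = card V"
    using T by (auto simp: is_tree_iff)
  have "card (del_vertex a E) + 1 = card E"
    using card_del_vertex[OF E tree_finite_edges[OF T], of a] N by simp
  moreover have "card (V - {a}) = card V - 1"
    using aV fin by simp
  moreover have "connected_on (V - {a}) (del_vertex a E)"
    using T N by (intro connected_on_avoiding) (auto simp: is_tree_iff del_vertex_def)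
  moreover have "v \<in> V - {a}"
    using nbrs_subset[OF E] nbrs_not_self[of a E] N by auto
  ultimately show ?thesis
    using fin simple_edges_del_vertex[OF E, of a] ce by (auto simp: is_tree_iff)
qed

lemma is_tree_add_leaf:
  assumes T: "is_tree V E" and aV: "a \<notin> V" and rV: "r \<in> V"
  shows "is_tree (insert a V) (insert {a,r} E)"
proof -
  have E: "simple_edges V E" and fin: "finite V" and c: "connected_on V E"
    and ce: "card E + 1 = card V"
    using T by (auto simp: is_tree_iff)
  let ?E = "insert {a,r} E"
  have new: "{a,r} \<notin> E"
    using simple_edges_subset_Pow[OF E] aV by auto
  have E': "simple_edges (insert a V) ?E"
    using E aV rV unfolding simple_edges_def by blast
  have to_r: "reach ?E u r" and from_r: "reach ?E r u" if "u \<in> insert a V" for u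
  proof -
    have "adj ?E a r" "adj ?E r a"
      using aV rV by (auto simp: adj_def insert_commute)
    moreover have "reach ?E u r" "reach ?E r u" if "u \<in> V"
      using reach_mono[of E ?E] c that rV by (auto simp: connected_on_def)
    ultimately show "reach ?E u r" "reach ?E r u"
      using that by auto
  qed
  have "connected_on (insert a V) ?E"
    unfolding connected_on_def using to_r from_r by (meson rtranclp_trans)
  then show ?thesis
    using E' fin new tree_finite_edges[OF T] ce aV by (auto simp: is_tree_iff)
qed

lemma smooth_connected:
  assumes T: "is_tree V E" and N: "nbrs E a = {x,y}"
  shows "connected_on (V - {a}) (smooth a E)"
proof (rule connected_on_avoiding)
  show "connected_on V E"
    using T by (simp add: is_tree_iff)
  show "{e\<in>E. a\<notin>e} \<subseteq> smooth a E"
    by (auto simp: del_vertex_def smooth_def)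
  have "adj (smooth a E) x y" "adj (smooth a E) y x" if "x \<noteq> y"
    using that N by (auto simp: smooth_def adj_def insert_commute)
  then show "reach (smooth a E) p q" if "p \<in> nbrs E a" "q \<in> nbrs E a" for p q
    using that N by (cases "x = y") auto
qed

text \<open>The neighbours of a degree-2 vertex of a tree are not adjacent: otherwise smoothing would
  leave a connected graph on one vertex fewer with two edges fewer.\<close>

lemma smooth_nbrs_not_edge:
  assumes T: "is_tree V E" and aV: "a \<in> V" and N: "nbrs E a = {x,y}" and xy: "x \<noteq> y"
  shows "{x,y} \<notin> E"
proof
  assume xyE: "{x,y} \<in> E"
  have E: "simple_edges V E" and fin: "finite V" and ce: "card E + 1 = card V"
    using T by (auto simp: is_tree_iff)
  have xa: "x \<noteq> a" "y \<noteq> a" and xV: "x \<in> V" "y \<in> V"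
    using N nbrs_not_self[of a E] nbrs_subset[OF E, of a] by auto
  have cD: "card (del_vertex a E) + 2 = card E"
    using card_del_vertex[OF E tree_finite_edges[OF T], of a] N xy by simp
  have "smooth a E = del_vertex a E"
    using xyE xa N by (auto simp: smooth_def del_vertex_def)
  then have "card (V - {a}) \<le> card (del_vertex a E) + 1"
    using connected_card_verts_le[OF _ simple_edges_del_vertex[OF E]] smooth_connected[OF T N] fin xV xa
    by fastforce
  moreover have "card {a,x,y} \<le> card V"
    using aV xV by (intro card_mono[OF fin]) auto
  ultimately show False
    using cD ce xa xy aV fin by simp
qed

lemma is_tree_smooth:
  assumes T: "is_tree V E" and aV: "a \<in> V" and N: "nbrs E a = {x,y}" and xy: "x \<noteq> y"
  shows "is_tree (V - {a}) (smooth a E)"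
proof -
  have E: "simple_edges V E" and fin: "finite V" and ce: "card E + 1 = card V"
    using T by (auto simp: is_tree_iff)
  have xa: "x \<noteq> a" "y \<noteq> a" and xV: "x \<in> V" "y \<in> V"
    using N nbrs_not_self[of a E] nbrs_subset[OF E, of a] by auto
  have cD: "card (del_vertex a E) + 2 = card E"
    using card_del_vertex[OF E tree_finite_edges[OF T], of a] N xy by simp
  have "nbrs E a \<notin> del_vertex a E"
    using N smooth_nbrs_not_edge[OF assms] by (auto simp: del_vertex_def)
  then have "card (smooth a E) = card (del_vertex a E) + 1"
    using tree_finite_edges[OF T] by (simp add: smooth_def del_vertex_def)
  moreover have "simple_edges (V - {a}) (smooth a E)"
    using simple_edges_del_vertex[OF E, of a] xa xV xy N unfolding smooth_def simple_edges_def by auto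
  ultimately show ?thesis
    using smooth_connected[OF T N] cD ce fin aV xa xV by (auto simp: is_tree_iff)
qed

lemma connected_on_subdivide:
  assumes E: "simple_edges V E" and c: "connected_on V E" and eE: "e \<in> E" and aV: "a \<notin> V"
  shows "connected_on (insert a V) (subdivide a e E)"
proof -
  obtain x y where e: "e = {x,y}" "x \<noteq> y" "x \<in> V" "y \<in> V"
    using E eE unfolding simple_edges_def by blast
  let ?S = "subdivide a e E"
  have ax: "adj ?S a x" "adj ?S x a" "adj ?S a y" "adj ?S y a"
    using e aV by (auto simp: adj_def subdivide_def insert_commute)
  have old: "reach ?S u w" if "u \<in> V" "w \<in> V" for u w
  proof (rule reach_if_adj_reach[of E])
    show "reach E u w"
      using c that by (auto simp: connected_on_def)
    fix p q assume pq: "adj E p q"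
    show "reach ?S p q"
    proof (cases "{p,q} = e")
      case True
      then have "(p = x \<and> q = y) \<or> (p = y \<and> q = x)"
        using e by (auto simp: doubleton_eq_iff)
      then show ?thesis
        using ax by (meson converse_rtranclp_into_rtranclp r_into_rtranclp)
    next
      case False
      then have "adj ?S p q"
        using pq by (auto simp: adj_def subdivide_def)
      then show ?thesis by auto
    qed
  qed
  have "reach ?S u x" "reach ?S x u" if "u \<in> insert a V" for u
    using that old[of u x] old[of x u] e ax by auto
  then show ?thesis
    unfolding connected_on_def by (meson rtranclp_trans)
qed

lemma is_tree_subdivide:
  assumes T: "is_tree V E" and eE: "e \<in> E" and aV: "a \<notin> V"
  shows "is_tree (insert a V) (subdivide a e E)"
proof -
  have E: "simple_edges V E" and fin: "finite V" and c: "connected_on V E"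
    and ce: "card E + 1 = card V"
    using T by (auto simp: is_tree_iff)
  obtain x y where e: "e = {x,y}" "x \<noteq> y" "x \<in> V" "y \<in> V"
    using E eE unfolding simple_edges_def by blast
  have S: "subdivide a e E = insert {a,x} (insert {a,y} (E - {e}))"
    using e by (auto simp: subdivide_def)
  have new: "{a,x} \<notin> E - {e}" "{a,y} \<notin> E - {e}" "{a,x} \<noteq> {a,y}"
    using simple_edges_subset_Pow[OF E] aV e by (auto simp: doubleton_eq_iff)
  have "card (subdivide a e E) = card E + 1"
    unfolding S using new tree_finite_edges[OF T] card.remove[OF tree_finite_edges[OF T] eE] by simp
  moreover have "simple_edges (insert a V) (subdivide a e E)"
    using E e aV unfolding S simple_edges_def by blast
  ultimately show ?thesis
    using connected_on_subdivide[OF E c eE aV] fin ce aV by (auto simp: is_tree_iff)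
qed

lemma card_insert_Diff_swap:
  "finite N \<Longrightarrow> a \<notin> N \<Longrightarrow> b \<in> N \<Longrightarrow> card (insert a (N - {b})) = card N"
  by (simp add: card_Diff_singleton) (metis card_Diff1_less card_gt_0_iff empty_iff Suc_pred)

lemma nbrs_subdivide_new:
  assumes E: "simple_edges V E" and aV: "a \<notin> V" and e: "e \<in> E"
  shows "nbrs (subdivide a e E) a = e"
proof -
  have eV: "e \<subseteq> V"
    using E e simple_edges_subset_Pow by auto
  have "adj (subdivide a e E) a z \<longleftrightarrow> z \<in> e" for z
  proof
    assume "adj (subdivide a e E) a z"
    then have "a \<noteq> z" "{a,z} \<in> (\<lambda>z. {a,z}) ` e \<union> (E - {e})"
      by (auto simp: adj_def subdivide_def)
    moreover have "{a,z} \<notin> E"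
      using aV simple_edges_subset_Pow[OF E] by auto
    ultimately show "z \<in> e"
      by (auto simp: doubleton_eq_iff)
  next
    assume "z \<in> e"
    then show "adj (subdivide a e E) a z"
      using eV aV by (auto simp: adj_def subdivide_def)
  qed
  then show ?thesis
    by (auto simp: nbrs_def)
qed

lemma nbrs_subdivide:
  assumes E: "simple_edges V E" and aV: "a \<notin> V" and e: "e \<in> E" and wa: "w \<noteq> a"
  shows "nbrs (subdivide a e E) w = (if w \<in> e then insert a (nbrs E w - e) else nbrs E w)"
proof -
  obtain x y where xy: "e = {x,y}" "x \<noteq> y" "x \<in> V" "y \<in> V"
    using E e unfolding simple_edges_def by blast
  have S: "subdivide a e E = insert {a,x} (insert {a,y} (E - {{x,y}}))"
    using xy by (auto simp: subdivide_def)
  have "adj (subdivide a e E) w z \<longleftrightarrow>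
          (if w \<in> e then z = a \<or> (adj E w z \<and> z \<notin> e) else adj E w z)" for z
    unfolding S adj_insert adj_diff using wa xy aV by (auto simp: doubleton_eq_iff adj_def)
  then show ?thesis
    by (auto simp: nbrs_def)
qed

lemma card_nbrs_subdivide:
  assumes T: "is_tree V E" and aV: "a \<notin> V" and e: "e \<in> E" and wV: "w \<in> V"
  shows "card (nbrs (subdivide a e E) w) = card (nbrs E w)"
proof (cases "w \<in> e")
  case True
  have E: "simple_edges V E"
    using T tree_simple_edges by blast
  then obtain w' where e_eq: "e = {w, w'}" "w \<noteq> w'"
    using simple_edge_at[OF E e True] by blast
  then have "nbrs E w - e = nbrs E w - {w'}" "w' \<in> nbrs E w" "a \<notin> nbrs E w"
    using e nbrs_not_self[of w E] nbrs_subset[OF E] aV by (auto simp: nbrs_def adj_def)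
  moreover have "w \<noteq> a"
    using wV aV by auto
  ultimately have "nbrs (subdivide a e E) w = insert a (nbrs E w - {w'})"
    using nbrs_subdivide[OF E aV e] True by simp
  then show ?thesis
    using card_insert_Diff_swap[OF tree_finite_nbrs[OF T]] \<open>a \<notin> nbrs E w\<close> \<open>w' \<in> nbrs E w\<close>
    by simp
next
  case False
  moreover have "w \<noteq> a"
    using wV aV by auto
  ultimately show ?thesis
    using nbrs_subdivide[OF tree_simple_edges[OF T] aV e] by simp
qed

lemma nbrs_smooth:
  assumes "nbrs E a = {x,y}" and "x \<noteq> y" and "w \<noteq> a"
  shows "nbrs (smooth a E) w = nbrs E w - {a} \<union> (if w = x then {y} else if w = y then {x} else {})"
proof -
  have "adj (smooth a E) w z \<longleftrightarrow> (adj E w z \<and> z \<noteq> a) \<or> (w = x \<and> z = y) \<or> (w = y \<and> z = x)" for z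
    using assms unfolding smooth_def adj_insert unfolding adj_def del_vertex_def
    by (auto simp: doubleton_eq_iff)
  then show ?thesis
    by (auto simp: nbrs_def)
qed

lemma card_nbrs_smooth:
  assumes T: "is_tree V E" and aV: "a \<in> V" and N: "nbrs E a = {x,y}" "x \<noteq> y"
    and w: "w \<in> V" "w \<noteq> a"
  shows "card (nbrs (smooth a E) w) = card (nbrs E w)"
proof (cases "w = x \<or> w = y")
  case True
  then obtain w' where w': "(w = x \<and> w' = y) \<or> (w = y \<and> w' = x)"
    by blast
  have "w' \<notin> nbrs E w"
    using w' smooth_nbrs_not_edge[OF T aV N] by (auto simp: nbrs_def adj_def insert_commute)
  moreover have "a \<in> nbrs E w"
    using N True adj_sym by (auto simp: nbrs_def)
  moreover have "nbrs (smooth a E) w = insert w' (nbrs E w - {a})"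
    using nbrs_smooth[OF N w(2)] w' N(2) by auto
  ultimately show ?thesis
    using card_insert_Diff_swap[OF tree_finite_nbrs[OF T]] by simp
next
  case False
  moreover have "a \<in> nbrs E w \<longleftrightarrow> w \<in> {x,y}"
    using N adj_sym by (auto simp: nbrs_def)
  ultimately show ?thesis
    using nbrs_smooth[OF N w(2)] by auto
qed

lemma smooth_subdivide:
  assumes "simple_edges V E" and "a \<notin> V" and "e \<in> E"
  shows "smooth a (subdivide a e E) = E"
proof -
  have "del_vertex a (subdivide a e E) = E - {e}"
    using assms simple_edges_subset_Pow unfolding del_vertex_def subdivide_def by auto
  then show ?thesis
    using nbrs_subdivide_new[OF assms] assms(3) by (auto simp: smooth_def)
qed

lemma subdivide_smooth:
  assumes T: "is_tree V E" and aV: "a \<in> V" and N: "nbrs E a = {x,y}" "x \<noteq> y"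
  shows "subdivide a (nbrs E a) (smooth a E) = E"
proof -
  have "nbrs E a \<notin> del_vertex a E"
    using N smooth_nbrs_not_edge[OF T aV N] by (auto simp: del_vertex_def)
  then have "subdivide a (nbrs E a) (smooth a E) = (\<lambda>z. {a,z}) ` nbrs E a \<union> del_vertex a E"
    by (auto simp: subdivide_def smooth_def)
  also have "\<dots> = E"
    using edges_at_eq[OF tree_simple_edges[OF T], of a] by (auto simp: del_vertex_def)
  finally show ?thesis .
qed

section \<open>Greg trees on an arbitrary vertex set\<close>

definition greg_trees_on :: "nat set \<Rightarrow> nat set \<Rightarrow> nat set set set" where
  "greg_trees_on L V = {E. is_tree V E \<and> (\<forall>v\<in>V-L. deg E v \<ge> 3)}"

definition rooted_greg_trees_on :: "nat set \<Rightarrow> nat set \<Rightarrow> (nat set set \<times> nat) set" where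
  "rooted_greg_trees_on L V =
     {(E,r). r \<in> V \<and> E \<in> greg_trees_on (insert r L) V \<and> (r \<in> L \<or> deg E r \<ge> 2)}"

lemma finite_greg_trees_on: "finite V \<Longrightarrow> finite (greg_trees_on L V)"
proof -
  assume "finite V"
  moreover have "greg_trees_on L V \<subseteq> Pow (Pow V)"
    using simple_edges_subset_Pow tree_simple_edges by (auto simp: greg_trees_on_def)
  ultimately show ?thesis
    by (meson finite_Pow_iff finite_subset)
qed

lemma subdivide_mem_greg_trees_on:
  assumes aV: "a \<in> V" and aL: "a \<notin> L" and E': "E' \<in> greg_trees_on L (V-{a})" and e: "e \<in> E'"
  shows "subdivide a e E' \<in> greg_trees_on (insert a L) V \<and> deg (subdivide a e E') a = 2"
proof -
  have T: "is_tree (V-{a}) E'"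
    using E' by (simp add: greg_trees_on_def)
  have E: "simple_edges (V-{a}) E'"
    using T tree_simple_edges by blast
  have T2: "is_tree V (subdivide a e E')"
    using is_tree_subdivide[OF T e, of a] insert_Diff[OF aV] by simp
  have "card e = 2"
    using E e unfolding simple_edges_def by auto
  then have "deg (subdivide a e E') a = 2"
    using tree_deg_eq[OF T2] nbrs_subdivide_new[OF E _ e] by simp
  moreover have "deg (subdivide a e E') v \<ge> 3" if "v \<in> V - insert a L" for v
  proof -
    have "v \<in> V - {a}" "v \<in> (V - {a}) - L"
      using that by auto
    then show ?thesis
      using E' card_nbrs_subdivide[OF T _ e] tree_deg_eq[OF T2] tree_deg_eq[OF T]
      by (auto simp: greg_trees_on_def)
  qed
  ultimately show ?thesis
    using T2 by (auto simp: greg_trees_on_def)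
qed

lemma smooth_mem_greg_trees_on:
  assumes aV: "a \<in> V" and E: "E \<in> greg_trees_on (insert a L) V" and d: "deg E a = 2"
  shows "smooth a E \<in> greg_trees_on L (V - {a}) \<and> nbrs E a \<in> smooth a E"
proof -
  have T: "is_tree V E"
    using E by (simp add: greg_trees_on_def)
  then obtain x y where N: "nbrs E a = {x,y}" "x \<noteq> y"
    using d by (auto simp: tree_deg_eq card_2_iff)
  have T2: "is_tree (V-{a}) (smooth a E)"
    by (rule is_tree_smooth[OF T aV N])
  have "deg (smooth a E) v \<ge> 3" if "v \<in> (V - {a}) - L" for v
    using that E card_nbrs_smooth[OF T aV N, of v] tree_deg_eq[OF T2] tree_deg_eq[OF T]
    by (auto simp: greg_trees_on_def)
  then show ?thesis
    using T2 by (auto simp: greg_trees_on_def smooth_def)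
qed

lemma bij_subdivide:
  assumes aV: "a \<in> V" and aL: "a \<notin> L"
  shows "bij_betw (\<lambda>(E',e). subdivide a e E') (SIGMA E':greg_trees_on L (V-{a}). E')
           {E \<in> greg_trees_on (insert a L) V. deg E a = 2}"
proof (rule bij_betw_byWitness[where f'="\<lambda>E. (smooth a E, nbrs E a)"])
  show "\<forall>p\<in>(SIGMA E':greg_trees_on L (V-{a}). E').
          (\<lambda>E. (smooth a E, nbrs E a)) ((\<lambda>(E',e). subdivide a e E') p) = p"
  proof (intro ballI)
    fix p assume "p \<in> (SIGMA E':greg_trees_on L (V-{a}). E')"
    then obtain E' e where p: "p = (E',e)" "E' \<in> greg_trees_on L (V-{a})" "e \<in> E'"
      by blast
    then have E: "simple_edges (V-{a}) E'"
      using tree_simple_edges by (simp add: greg_trees_on_def)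
    show "(\<lambda>E. (smooth a E, nbrs E a)) ((\<lambda>(E',e). subdivide a e E') p) = p"
      using p smooth_subdivide[OF E _ p(3)] nbrs_subdivide_new[OF E _ p(3)] by simp
  qed
  show "\<forall>E\<in>{E \<in> greg_trees_on (insert a L) V. deg E a = 2}.
          (\<lambda>(E',e). subdivide a e E') (smooth a E, nbrs E a) = E"
  proof (intro ballI)
    fix E assume E: "E \<in> {E \<in> greg_trees_on (insert a L) V. deg E a = 2}"
    then have T: "is_tree V E"
      by (simp add: greg_trees_on_def)
    then obtain x y where "nbrs E a = {x,y}" "x \<noteq> y"
      using E by (auto simp: tree_deg_eq card_2_iff)
    then show "(\<lambda>(E',e). subdivide a e E') (smooth a E, nbrs E a) = E"
      using subdivide_smooth[OF T aV] by simp
  qed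
  show "(\<lambda>(E',e). subdivide a e E') ` (SIGMA E':greg_trees_on L (V-{a}). E')
          \<subseteq> {E \<in> greg_trees_on (insert a L) V. deg E a = 2}"
  proof
    fix E assume "E \<in> (\<lambda>(E',e). subdivide a e E') ` (SIGMA E':greg_trees_on L (V-{a}). E')"
    then obtain E' e where "E = subdivide a e E'" "E' \<in> greg_trees_on L (V-{a})" "e \<in> E'"
      by auto
    then show "E \<in> {E \<in> greg_trees_on (insert a L) V. deg E a = 2}"
      using subdivide_mem_greg_trees_on[OF aV aL] by simp
  qed
  show "(\<lambda>E. (smooth a E, nbrs E a)) ` {E \<in> greg_trees_on (insert a L) V. deg E a = 2}
          \<subseteq> (SIGMA E':greg_trees_on L (V-{a}). E')"
  proof
    fix p assume "p \<in> (\<lambda>E. (smooth a E, nbrs E a)) ` {E \<in> greg_trees_on (insert a L) V. deg E a = 2}"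
    then obtain E where "p = (smooth a E, nbrs E a)" "E \<in> greg_trees_on (insert a L) V" "deg E a = 2"
      by blast
    then show "p \<in> (SIGMA E':greg_trees_on L (V-{a}). E')"
      using smooth_mem_greg_trees_on[OF aV] by simp
  qed
qed

lemma card_greg_trees_on_deg2:
  assumes fin: "finite V" and aV: "a \<in> V" and aL: "a \<notin> L"
  shows "card {E \<in> greg_trees_on (insert a L) V. deg E a = 2}
           = card (greg_trees_on L (V-{a})) * (card V - 2)"
proof -
  have "card {E \<in> greg_trees_on (insert a L) V. deg E a = 2}
          = card (SIGMA E':greg_trees_on L (V-{a}). E')"
    using bij_betw_same_card[OF bij_subdivide[OF aV aL]] by simp
  also have "\<dots> = (\<Sum>E'\<in>greg_trees_on L (V-{a}). card E')"
    using finite_greg_trees_on[of "V-{a}" L] fin tree_finite_edges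
    by (auto simp: greg_trees_on_def intro!: card_SigmaI)
  also have "\<dots> = (\<Sum>E'\<in>greg_trees_on L (V-{a}). card V - 2)"
    by (rule sum.cong) (use aV fin in \<open>auto simp: greg_trees_on_def tree_card_edges\<close>)
  finally show ?thesis by simp
qed

lemma card_greg_trees_on_deg_ge2:
  assumes fin: "finite V" and aV: "a \<in> V" and aL: "a \<notin> L"
  shows "card {E \<in> greg_trees_on (insert a L) V. deg E a \<ge> 2}
           = card (greg_trees_on L V) + card (greg_trees_on L (V-{a})) * (card V - 2)"
proof -
  let ?D2 = "{E \<in> greg_trees_on (insert a L) V. deg E a = 2}"
  have ge3: "deg E a \<ge> 3" if "E \<in> greg_trees_on L V" for E
    using that aV aL by (auto simp: greg_trees_on_def)
  have "{E \<in> greg_trees_on (insert a L) V. deg E a \<ge> 2} = greg_trees_on L V \<union> ?D2"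
  proof
    show "greg_trees_on L V \<union> ?D2 \<subseteq> {E \<in> greg_trees_on (insert a L) V. deg E a \<ge> 2}"
      using ge3 by (fastforce simp: greg_trees_on_def)
    show "{E \<in> greg_trees_on (insert a L) V. deg E a \<ge> 2} \<subseteq> greg_trees_on L V \<union> ?D2"
      by (auto simp: greg_trees_on_def)
  qed
  moreover have "greg_trees_on L V \<inter> ?D2 = {}"
    using ge3 by fastforce
  ultimately show ?thesis
    using finite_greg_trees_on[OF fin] card_greg_trees_on_deg2[OF assms]
    by (simp add: card_Un_disjoint)
qed

lemma add_leaf_mem_greg_trees_on:
  assumes aV: "a \<in> V" and aL: "a \<notin> L" and R: "(E',r) \<in> rooted_greg_trees_on L (V-{a})"
  shows "insert {a,r} E' \<in> greg_trees_on (insert a L) V \<and> deg (insert {a,r} E') a = 1"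
proof -
  have T: "is_tree (V-{a}) E'" and rV: "r \<in> V - {a}"
    and E': "E' \<in> greg_trees_on (insert r L) (V-{a})" and root: "r \<in> L \<or> deg E' r \<ge> 2"
    using R by (auto simp: rooted_greg_trees_on_def greg_trees_on_def)
  have E: "simple_edges (V-{a}) E'"
    using T tree_simple_edges by blast
  have T2: "is_tree V (insert {a,r} E')"
    using is_tree_add_leaf[OF T _ rV, of a] insert_Diff[OF aV] by simp
  have "nbrs (insert {a,r} E') a = {r}"
    using rV adj_in_verts[OF E] by (auto simp: nbrs_def adj_insert doubleton_eq_iff)
  then have "deg (insert {a,r} E') a = 1"
    using tree_deg_eq[OF T2] by simp
  moreover have "deg (insert {a,r} E') v \<ge> 3" if v: "v \<in> V - insert a L" for v
  proof (cases "v = r")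
    case True
    have "a \<notin> nbrs E' r"
      using nbrs_subset[OF E] by auto
    then have "deg (insert {a,r} E') r = deg E' r + 1"
      using tree_deg_eq[OF T2] tree_deg_eq[OF T] nbrs_insert_edge[of a r E'] rV tree_finite_nbrs[OF T]
      by simp
    then show ?thesis
      using root v True by simp
  next
    case False
    then have "deg (insert {a,r} E') v = deg E' v"
      using tree_deg_eq[OF T2] tree_deg_eq[OF T] nbrs_insert_other[of v "{a,r}" E'] v by simp
    then show ?thesis
      using E' v False by (auto simp: greg_trees_on_def)
  qed
  ultimately show ?thesis
    using T2 by (auto simp: greg_trees_on_def)
qed

lemma del_leaf_mem_rooted_greg_trees_on:
  assumes aV: "a \<in> V" and E: "E \<in> greg_trees_on (insert a L) V" and N: "nbrs E a = {r}"
  shows "(del_vertex a E, r) \<in> rooted_greg_trees_on L (V-{a})"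
proof -
  have T: "is_tree V E"
    using E by (simp add: greg_trees_on_def)
  have T2: "is_tree (V-{a}) (del_vertex a E)"
    by (rule is_tree_del_leaf[OF T aV N])
  have rV: "r \<in> V - {a}"
    using N nbrs_subset[OF tree_simple_edges[OF T]] nbrs_not_self[of a E] by auto
  have a_nbr: "a \<in> nbrs E v \<longleftrightarrow> v = r" for v
    using N adj_sym by (auto simp: nbrs_def)
  have "deg (del_vertex a E) v \<ge> 3" if v: "v \<in> (V-{a}) - insert r L" for v
  proof -
    have "nbrs (del_vertex a E) v = nbrs E v"
      using nbrs_del_vertex[of v a E] a_nbr[of v] v by auto
    then show ?thesis
      using tree_deg_eq[OF T2] tree_deg_eq[OF T] E v by (auto simp: greg_trees_on_def)
  qed
  moreover have "deg (del_vertex a E) r \<ge> 2" if "r \<notin> L"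
  proof -
    have "card (nbrs E r) \<ge> 3"
      using E rV that tree_deg_eq[OF T] by (auto simp: greg_trees_on_def)
    moreover have "nbrs (del_vertex a E) r = nbrs E r - {a}"
      using nbrs_del_vertex[of r a E] rV by auto
    ultimately show ?thesis
      using a_nbr[of r] tree_finite_nbrs[OF T] tree_deg_eq[OF T2] by simp
  qed
  ultimately show ?thesis
    using T2 rV by (auto simp: rooted_greg_trees_on_def greg_trees_on_def)
qed

lemma bij_add_leaf:
  assumes aV: "a \<in> V" and aL: "a \<notin> L"
  shows "bij_betw (\<lambda>(E',r). insert {a,r} E') (rooted_greg_trees_on L (V-{a}))
           {E \<in> greg_trees_on (insert a L) V. deg E a = 1}"
proof (rule bij_betw_byWitness[where f'="\<lambda>E. (del_vertex a E, the_elem (nbrs E a))"])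
  show "\<forall>p\<in>rooted_greg_trees_on L (V-{a}).
          (\<lambda>E. (del_vertex a E, the_elem (nbrs E a))) ((\<lambda>(E',r). insert {a,r} E') p) = p"
  proof clarify
    fix E' r assume "(E',r) \<in> rooted_greg_trees_on L (V-{a})"
    then have E: "simple_edges (V-{a}) E'" and rV: "r \<in> V - {a}"
      by (auto simp: rooted_greg_trees_on_def greg_trees_on_def tree_simple_edges)
    have "del_vertex a (insert {a,r} E') = E'"
      using del_vertex_outside[OF E] by (auto simp: del_vertex_def)
    moreover have "nbrs (insert {a,r} E') a = {r}"
      using rV adj_in_verts[OF E] by (auto simp: nbrs_def adj_insert doubleton_eq_iff)
    ultimately show "del_vertex a (insert {a,r} E') = E' \<and> the_elem (nbrs (insert {a,r} E') a) = r"
      by simp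
  qed
  show "\<forall>E\<in>{E \<in> greg_trees_on (insert a L) V. deg E a = 1}.
          (\<lambda>(E',r). insert {a,r} E') (del_vertex a E, the_elem (nbrs E a)) = E"
  proof clarify
    fix E assume "E \<in> greg_trees_on (insert a L) V" "deg E a = 1"
    then have T: "is_tree V E" and "card (nbrs E a) = 1"
      by (auto simp: greg_trees_on_def tree_deg_eq)
    then obtain r where N: "nbrs E a = {r}"
      by (auto simp: card_1_singleton_iff)
    have "{e\<in>E. a\<in>e} = {{a,r}}"
      using edges_at_eq[OF tree_simple_edges[OF T], of a] N by simp
    then show "insert {a, the_elem (nbrs E a)} (del_vertex a E) = E"
      using N by (auto simp: del_vertex_def)
  qed
  show "(\<lambda>(E',r). insert {a,r} E') ` rooted_greg_trees_on L (V-{a})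
          \<subseteq> {E \<in> greg_trees_on (insert a L) V. deg E a = 1}"
    using add_leaf_mem_greg_trees_on[OF aV aL] by auto
  show "(\<lambda>E. (del_vertex a E, the_elem (nbrs E a))) ` {E \<in> greg_trees_on (insert a L) V. deg E a = 1}
          \<subseteq> rooted_greg_trees_on L (V-{a})"
  proof clarify
    fix E assume E: "E \<in> greg_trees_on (insert a L) V" "deg E a = 1"
    then obtain r where "nbrs E a = {r}"
      by (auto simp: greg_trees_on_def tree_deg_eq card_1_singleton_iff)
    then show "(del_vertex a E, the_elem (nbrs E a)) \<in> rooted_greg_trees_on L (V-{a})"
      using del_leaf_mem_rooted_greg_trees_on[OF aV E(1)] by simp
  qed
qed

lemma card_greg_trees_on_insert:
  assumes fin: "finite V" and aV: "a \<in> V" and aL: "a \<notin> L" and c: "card V \<ge> 2"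
  shows "card (greg_trees_on (insert a L) V)
           = card (rooted_greg_trees_on L (V-{a})) + card (greg_trees_on L V)
             + card (greg_trees_on L (V-{a})) * (card V - 2)"
proof -
  let ?D1 = "{E \<in> greg_trees_on (insert a L) V. deg E a = 1}"
  let ?D2 = "{E \<in> greg_trees_on (insert a L) V. deg E a \<ge> 2}"
  have "greg_trees_on (insert a L) V = ?D1 \<union> ?D2"
    using tree_deg_pos[OF _ aV c] by (force simp: greg_trees_on_def)
  moreover have "card (?D1 \<union> ?D2) = card ?D1 + card ?D2"
    using finite_greg_trees_on[OF fin] by (intro card_Un_disjoint) auto
  ultimately have "card (greg_trees_on (insert a L) V) = card ?D1 + card ?D2"
    by simp
  then show ?thesis
    using bij_betw_same_card[OF bij_add_leaf[OF aV aL]] card_greg_trees_on_deg_ge2[OF assms(1-3)]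
    by simp
qed

lemma card_rooted_greg_trees_on:
  assumes fin: "finite V" and LV: "L \<subseteq> V"
  shows "card (rooted_greg_trees_on L V) = card L * card (greg_trees_on L V)
           + (\<Sum>r\<in>V-L. card {E \<in> greg_trees_on (insert r L) V. deg E r \<ge> 2})"
proof -
  define R where "R r = {E \<in> greg_trees_on (insert r L) V. r \<in> L \<or> deg E r \<ge> 2}" for r
  have "rooted_greg_trees_on L V = (\<lambda>(r,E). (E,r)) ` (SIGMA r:V. R r)"
    by (force simp: rooted_greg_trees_on_def R_def)
  moreover have "inj_on (\<lambda>(r,E). (E,r)) (SIGMA r:V. R r)"
    by (auto simp: inj_on_def)
  ultimately have "card (rooted_greg_trees_on L V) = card (SIGMA r:V. R r)"
    by (simp add: card_image)
  also have "\<dots> = (\<Sum>r\<in>V. card (R r))"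
    using fin finite_greg_trees_on[OF fin] by (intro card_SigmaI) (auto simp: R_def)
  also have "\<dots> = (\<Sum>r\<in>L. card (R r)) + (\<Sum>r\<in>V-L. card (R r))"
    using sum.subset_diff[OF LV fin] by (simp add: add.commute)
  also have "(\<Sum>r\<in>L. card (R r)) = card L * card (greg_trees_on L V)"
    by (simp add: R_def insert_absorb)
  also have "(\<Sum>r\<in>V-L. card (R r)) = (\<Sum>r\<in>V-L. card {E \<in> greg_trees_on (insert r L) V. deg E r \<ge> 2})"
    by (rule sum.cong) (auto simp: R_def)
  finally show ?thesis .
qed

section \<open>Relabelling vertices\<close>

definition edge_image :: "(nat \<Rightarrow> nat) \<Rightarrow> nat set set \<Rightarrow> nat set set" where
  "edge_image f E = (\<lambda>e. f ` e) ` E"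

lemma edge_image_id: "edge_image id E = E"
  by (simp add: edge_image_def)

lemma edge_image_comp: "edge_image (p \<circ> q) E = edge_image p (edge_image q E)"
  by (simp add: edge_image_def image_comp)

lemma adj_edge_image:
  assumes "inj_on f V" "simple_edges V E" "adj E u w"
  shows "adj (edge_image f E) (f u) (f w)"
proof -
  have "u \<in> V" "w \<in> V" "u \<noteq> w"
    using adj_in_verts[OF assms(2,3)] assms(3) by (auto simp: adj_def)
  then have "f u \<noteq> f w"
    using assms(1) by (auto simp: inj_on_def)
  moreover have "f ` {u,w} \<in> edge_image f E"
    using assms(3) unfolding edge_image_def adj_def by blast
  ultimately show ?thesis
    by (simp add: adj_def)
qed

lemma reach_edge_image:
  assumes "inj_on f V" "simple_edges V E" "reach E u w"
  shows "reach (edge_image f E) (f u) (f w)"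
  using assms(3) by induction (auto intro: rtranclp.rtrancl_into_rtrancl adj_edge_image[OF assms(1,2)])

lemma nbrs_edge_image:
  assumes inj: "inj_on f V" and E: "simple_edges V E" and v: "v \<in> V"
  shows "nbrs (edge_image f E) (f v) = f ` nbrs E v"
proof
  show "f ` nbrs E v \<subseteq> nbrs (edge_image f E) (f v)"
    using adj_edge_image[OF inj E] by (auto simp: nbrs_def)
  show "nbrs (edge_image f E) (f v) \<subseteq> f ` nbrs E v"
  proof
    fix z assume "z \<in> nbrs (edge_image f E) (f v)"
    then have "{f v, z} \<in> edge_image f E"
      by (auto simp: nbrs_def adj_def)
    then obtain e where e: "e \<in> E" "{f v, z} = f ` e"
      by (auto simp: edge_image_def)
    then obtain p q where pq: "e = {p,q}" "p \<noteq> q" "p \<in> V" "q \<in> V"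
      using E unfolding simple_edges_def by blast
    then have "{f v, z} = {f p, f q}"
      using e by auto
    then have "(f v = f p \<and> z = f q) \<or> (f v = f q \<and> z = f p)"
      by (auto simp: doubleton_eq_iff)
    then have "(v = p \<and> z = f q) \<or> (v = q \<and> z = f p)"
      using inj v pq by (auto simp: inj_on_def)
    then show "z \<in> f ` nbrs E v"
      using pq e by (auto simp: nbrs_def adj_def insert_commute)
  qed
qed

lemma simple_edges_edge_image:
  assumes inj: "inj_on f V" and E: "simple_edges V E"
  shows "simple_edges (f ` V) (edge_image f E)"
  unfolding simple_edges_def edge_image_def
proof
  fix e' assume "e' \<in> (\<lambda>e. f ` e) ` E"
  then obtain e where "e \<in> E" "e' = f ` e"
    by auto
  moreover from this obtain u v where "e = {u,v}" "u \<noteq> v" "u \<in> V" "v \<in> V"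
    using E unfolding simple_edges_def by blast
  ultimately show "\<exists>u v. e' = {u, v} \<and> u \<noteq> v \<and> u \<in> f ` V \<and> v \<in> f ` V"
    using inj by (intro exI[of _ "f u"] exI[of _ "f v"]) (auto simp: inj_on_def)
qed

lemma is_tree_edge_image:
  assumes bij: "bij_betw f V V'" and T: "is_tree V E"
  shows "is_tree V' (edge_image f E)"
proof -
  have inj: "inj_on f V" and im: "f ` V = V'"
    using bij by (auto simp: bij_betw_def)
  have E: "simple_edges V E" and c: "connected_on V E"
    using T by (auto simp: is_tree_iff)
  have "inj_on (image f) E"
    using inj_on_image_Pow[OF inj] simple_edges_subset_Pow[OF E] inj_on_subset by blast
  then have "card (edge_image f E) = card E"
    by (simp add: edge_image_def card_image)
  moreover have "card V' = card V"
    using bij bij_betw_same_card by metis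
  moreover have "connected_on V' (edge_image f E)"
    using c im reach_edge_image[OF inj E] by (auto simp: connected_on_def)
  ultimately show ?thesis
    using simple_edges_edge_image[OF inj E] T im by (auto simp: is_tree_iff)
qed

lemma deg_edge_image:
  assumes "inj_on f V" and "simple_edges V E" and "v \<in> V"
  shows "deg (edge_image f E) (f v) = deg E v"
proof -
  have "deg (edge_image f E) (f v) = card (f ` nbrs E v)"
    using deg_eq_card_nbrs[OF simple_edges_edge_image[OF assms(1,2)]] nbrs_edge_image[OF assms]
    by simp
  also have "\<dots> = deg E v"
    using assms(1) nbrs_subset[OF assms(2)] deg_eq_card_nbrs[OF assms(2)]
    by (simp add: card_image inj_on_subset)
  finally show ?thesis .
qed

lemma edge_image_greg_trees_on:
  assumes bij: "bij_betw f V V'" and E: "E \<in> greg_trees_on L V" and LV: "L \<subseteq> V"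
  shows "edge_image f E \<in> greg_trees_on (f ` L) V'"
proof -
  have T: "is_tree V E"
    using E by (simp add: greg_trees_on_def)
  have inj: "inj_on f V" and im: "f ` V = V'"
    using bij by (auto simp: bij_betw_def)
  have "deg (edge_image f E) (f v) \<ge> 3" if "v \<in> V" "f v \<notin> f ` L" for v
    using that deg_edge_image[OF inj tree_simple_edges[OF T]] E by (auto simp: greg_trees_on_def)
  then show ?thesis
    using is_tree_edge_image[OF bij T] im by (auto simp: greg_trees_on_def)
qed

lemma card_greg_trees_on_le:
  assumes bij: "bij_betw f V V'" and LV: "L \<subseteq> V" and fin: "finite V'"
  shows "card (greg_trees_on L V) \<le> card (greg_trees_on (f ` L) V')"
proof (rule card_inj_on_le)
  have "inj_on (image (image f)) (Pow (Pow V))"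
    using bij by (intro inj_on_image_Pow) (auto simp: bij_betw_def)
  moreover have "greg_trees_on L V \<subseteq> Pow (Pow V)"
    using simple_edges_subset_Pow tree_simple_edges by (auto simp: greg_trees_on_def)
  ultimately show "inj_on (edge_image f) (greg_trees_on L V)"
    unfolding edge_image_def by (meson inj_on_subset)
  show "edge_image f ` greg_trees_on L V \<subseteq> greg_trees_on (f ` L) V'"
    using edge_image_greg_trees_on[OF bij _ LV] by auto
  show "finite (greg_trees_on (f ` L) V')"
    using finite_greg_trees_on[OF fin] .
qed

lemma card_greg_trees_on_bij:
  assumes bij: "bij_betw f V V'" and LV: "L \<subseteq> V" and fin: "finite V"
  shows "card (greg_trees_on L V) = card (greg_trees_on (f ` L) V')"
proof -
  have "inv_into V f ` f ` L = L" "f ` L \<subseteq> V'"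
    using bij LV by (auto simp: bij_betw_def inv_into_image_cancel)
  then have "card (greg_trees_on (f ` L) V') \<le> card (greg_trees_on L V)"
    using card_greg_trees_on_le[OF bij_betw_inv_into[OF bij] _ fin] by metis
  then show ?thesis
    using card_greg_trees_on_le[OF bij LV] bij_betw_finite[OF bij] fin by simp
qed

section \<open>Counting Greg trees with distinguishable unlabelled vertices\<close>

text \<open>Greg trees whose \<open>u\<close> unlabelled vertices are told apart by the extra names
  \<open>l, \<dots>, l+u-1\<close>.\<close>

definition greg_num :: "nat \<Rightarrow> nat \<Rightarrow> nat" where
  "greg_num l u = card (greg_trees_on {0..<l} {0..<l+u})"

text \<open>The root is one of the \<open>l\<close> labelled vertices, or one of the \<open>u\<close> unlabelled ones, of degree
  at least 3 or, subdividing one of the \<open>l+u-2\<close> edges of a tree with one unlabelled vertex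
  fewer, of degree 2.\<close>

definition rooted_greg_num :: "nat \<Rightarrow> nat \<Rightarrow> nat" where
  "rooted_greg_num l u = l * greg_num l u + u * (greg_num l u + greg_num l (u - 1) * (l + u - 2))"

lemma card_greg_trees_on_eq:
  assumes fin: "finite V" and LV: "L \<subseteq> V"
  shows "card (greg_trees_on L V) = greg_num (card L) (card (V - L))"
proof -
  define l where "l = card L"
  define u where "u = card (V - L)"
  have "finite L" "card L = card {0..<l}"
    using fin LV finite_subset by (auto simp: l_def)
  then obtain h1 where h1: "bij_betw h1 L {0..<l}"
    using finite_same_card_bij by blast
  have "finite (V - L)" "card (V - L) = card {l..<l+u}"
    using fin by (auto simp: u_def)
  then obtain h2 where h2: "bij_betw h2 (V - L) {l..<l+u}"
    using finite_same_card_bij by blast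
  define f where "f x = (if x \<in> L then h1 x else h2 x)" for x
  have b1: "bij_betw f L {0..<l}"
    using h1 by (rule bij_betw_cong[THEN iffD1, rotated]) (simp add: f_def)
  have b2: "bij_betw f (V - L) {l..<l+u}"
    using h2 by (rule bij_betw_cong[THEN iffD1, rotated]) (simp add: f_def)
  have "bij_betw f (L \<union> (V - L)) ({0..<l} \<union> {l..<l+u})"
    using bij_betw_combine[OF b1 b2] by auto
  moreover have "L \<union> (V - L) = V" "{0..<l} \<union> {l..<l+u} = {0..<l+u}"
    using LV by auto
  ultimately have "bij_betw f V {0..<l+u}"
    by simp
  moreover have "f ` L = {0..<l}"
    using b1 by (simp add: bij_betw_def)
  ultimately show ?thesis
    using card_greg_trees_on_bij[OF _ LV fin] by (simp add: greg_num_def l_def u_def)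
qed

lemma card_rooted_greg_trees_on_eq:
  assumes fin: "finite V" and LV: "L \<subseteq> V"
  shows "card (rooted_greg_trees_on L V) = rooted_greg_num (card L) (card (V - L))"
proof -
  have cV: "card V = card L + card (V - L)"
    using LV fin by (metis card_Diff_subset card_mono finite_subset le_add_diff_inverse)
  have "card {E \<in> greg_trees_on (insert r L) V. deg E r \<ge> 2}
          = greg_num (card L) (card (V - L)) + greg_num (card L) (card (V - L) - 1) * (card V - 2)"
    if r: "r \<in> V - L" for r
  proof -
    have "V - {r} - L = (V - L) - {r}"
      by auto
    then have "card (V - {r} - L) = card (V - L) - 1"
      using r fin by simp
    then show ?thesis
      using card_greg_trees_on_deg_ge2[OF fin, of r L] card_greg_trees_on_eq[OF fin LV]
        card_greg_trees_on_eq[of "V - {r}" L] fin LV r by auto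
  qed
  then show ?thesis
    using card_rooted_greg_trees_on[OF fin LV] card_greg_trees_on_eq[OF fin LV] cV
    by (simp add: rooted_greg_num_def)
qed

lemma greg_num_Suc:
  assumes l: "l \<ge> 1"
  shows "greg_num (Suc l) u = rooted_greg_num l u + greg_num l (Suc u) + greg_num l u * (l + u - 1)"
proof -
  define V where "V = {0..<Suc l+u}"
  define L where "L = {0..<l}"
  have fin: "finite V" and aV: "l \<in> V" "l \<notin> L" and c: "card V \<ge> 2"
    and LV: "L \<subseteq> V" "L \<subseteq> V - {l}" and VL: "V - {l} - L = {Suc l..<Suc l+u}"
    using l by (auto simp: V_def L_def)
  have "card (greg_trees_on (insert l L) V)
          = card (rooted_greg_trees_on L (V-{l})) + card (greg_trees_on L V)
            + card (greg_trees_on L (V-{l})) * (card V - 2)"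
    by (rule card_greg_trees_on_insert[OF fin aV c])
  moreover have "insert l L = {0..<Suc l}"
    by (auto simp: L_def)
  moreover have "card (greg_trees_on L V) = greg_num l (Suc u)"
    using card_greg_trees_on_eq[OF fin LV(1)] by (simp add: V_def L_def)
  moreover have "card (greg_trees_on L (V - {l})) = greg_num l u"
    using card_greg_trees_on_eq[of "V - {l}" L] fin LV(2) VL by (simp add: L_def)
  moreover have "card (rooted_greg_trees_on L (V-{l})) = rooted_greg_num l u"
    using card_rooted_greg_trees_on_eq[of "V - {l}" L] fin LV(2) VL by (simp add: L_def)
  ultimately show ?thesis
    by (simp add: V_def greg_num_def)
qed

text \<open>Counting degrees: the \<open>|L|\<close> labelled vertices have degree at least 1 and the others at
  least 3, while the degrees sum to \<open>2(|V| - 1)\<close>.\<close>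

lemma card_unlabelled_le:
  assumes E: "E \<in> greg_trees_on L V" and LV: "L \<subseteq> V" and c: "card V \<ge> 2"
  shows "card (V - L) + 2 \<le> card L"
proof -
  have T: "is_tree V E"
    using E by (simp add: greg_trees_on_def)
  have fin: "finite V"
    using tree_finite[OF T] .
  have "(\<Sum>v\<in>L. 1) \<le> (\<Sum>v\<in>L. deg E v)"
    using tree_deg_pos[OF T _ c] LV by (intro sum_mono) auto
  moreover have "(\<Sum>v\<in>V-L. 3) \<le> (\<Sum>v\<in>V-L. deg E v)"
    using E by (intro sum_mono) (auto simp: greg_trees_on_def)
  moreover have "(\<Sum>v\<in>V. deg E v) = (\<Sum>v\<in>L. deg E v) + (\<Sum>v\<in>V-L. deg E v)"
    using sum.subset_diff[OF LV fin] by (simp add: add.commute)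
  moreover have "card V = card L + card (V - L)"
    using LV fin by (metis card_Diff_subset card_mono finite_subset le_add_diff_inverse)
  ultimately show ?thesis
    using sum_deg_eq[OF fin tree_simple_edges[OF T]] T by (simp add: is_tree_iff)
qed

lemma greg_num_eq_0:
  assumes "l + u \<ge> 2" and "l < u + 2"
  shows "greg_num l u = 0"
  using card_unlabelled_le[of _ "{0..<l}" "{0..<l+u}"] assms
  by (fastforce simp: greg_num_def)

lemma greg_num_1_0: "greg_num 1 0 = 1"
proof -
  have "greg_trees_on {0..<1} {0..<1} = {{}}"
  proof
    show "{{}} \<subseteq> greg_trees_on {0..<1} {0..<1}"
      by (simp add: greg_trees_on_def is_tree_iff simple_edges_def connected_on_def)
    show "greg_trees_on {0..<1} {0..<1} \<subseteq> {{}}"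
      using tree_card_edges tree_finite_edges by (fastforce simp: greg_trees_on_def)
  qed
  then show ?thesis
    by (simp add: greg_num_def)
qed

section \<open>Exponential coefficients of the polynomials \<open>G\<^sub>n\<close> and \<open>H\<^sub>n\<close>\<close>

definition ecoeff :: "'a::{idom,ring_char_0} poly \<Rightarrow> nat \<Rightarrow> 'a" where
  "ecoeff P k = coeff P k * fact k"

lemma ecoeff_add: "ecoeff (P + Q) k = ecoeff P k + ecoeff Q k"
  by (simp add: ecoeff_def algebra_simps)

lemma ecoeff_smult: "ecoeff (smult c P) k = c * ecoeff P k"
  by (simp add: ecoeff_def)

lemma ecoeff_pCons_0: "ecoeff (pCons 0 P) k = of_nat k * ecoeff P (k - 1)"
  by (cases k) (simp_all add: ecoeff_def algebra_simps)

lemma ecoeff_pderiv: "ecoeff (pderiv P) k = ecoeff P (Suc k)"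
  by (simp add: ecoeff_def coeff_pderiv algebra_simps)

text \<open>Multiplication by \<open>x\<close> and differentiation act on exponential coefficients as index shifts,
  which turns the defining recurrences of \<open>G\<^sub>n\<close> and \<open>H\<^sub>n\<close> into the following.\<close>

lemma ecoeff_recurrence_step:
  fixes P :: "'a::{idom,ring_char_0} poly"
  shows "ecoeff ([:A, B:] * P + [:1, 1:]^2 * pderiv P) k
           = ecoeff P (Suc k) + (A + 2 * of_nat k) * ecoeff P k
             + of_nat k * (B + of_nat k - 1) * ecoeff P (k - 1)"
proof -
  have split: "[:A, B:] * P + [:1, 1:]^2 * pderiv P
      = smult A P + pCons 0 (smult B P) + pderiv P + smult 2 (pCons 0 (pderiv P))
        + pCons 0 (pCons 0 (pderiv P))"
    by (simp add: power2_eq_square algebra_simps smult_add_left one_pCons)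
  show ?thesis
  proof (cases k)
    case (Suc m)
    then show ?thesis
      unfolding split ecoeff_add ecoeff_smult
      by (cases m) (simp_all add: ecoeff_smult ecoeff_pCons_0 ecoeff_pderiv algebra_simps)
  next
    case 0
    then show ?thesis
      unfolding split ecoeff_add ecoeff_smult by (simp add: ecoeff_pCons_0 ecoeff_pderiv)
  qed
qed

lemma rooted_greg_num_int:
  assumes "n \<ge> 1"
  shows "int (rooted_greg_num n k) = (int n + int k) * int (greg_num n k)
           + int k * (int n + int k - 2) * int (greg_num n (k - 1))"
proof (cases k)
  case (Suc m)
  then have "int (n + k - 2) = int n + int k - 2"
    using assms by simp
  then show ?thesis
    unfolding rooted_greg_num_def of_nat_add of_nat_mult by (simp add: algebra_simps)
qed (simp add: rooted_greg_num_def)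

lemma greg_num_Suc_int:
  assumes "n \<ge> 1"
  shows "int (greg_num (Suc n) k) = int (greg_num n (Suc k))
           + (2 * int n + 2 * int k - 1) * int (greg_num n k)
           + int k * (int n + int k - 2) * int (greg_num n (k - 1))"
proof -
  have "int (n + k - 1) = int n + int k - 1"
    using assms by simp
  then show ?thesis
    unfolding greg_num_Suc[OF assms] of_nat_add of_nat_mult rooted_greg_num_int[OF assms]
    by (simp add: algebra_simps)
qed

lemma H_Suc: "n \<ge> 1 \<Longrightarrow> H (Suc n) = [:2 * int n - 1, int n - 1:] * H n + [:1, 1:]^2 * pderiv (H n)"
  by (cases n) auto

lemma G_Suc: "n \<ge> 1 \<Longrightarrow> G (Suc n) = [:2 * int n, int n:] * G n + [:1, 1:]^2 * pderiv (G n)"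
  by (cases n) auto

lemma ecoeff_H:
  assumes "n \<ge> 1"
  shows "ecoeff (H n) k = int (greg_num n k)"
  using assms
proof (induction n arbitrary: k rule: nat_induct_at_least)
  case base
  then show ?case
    using greg_num_1_0 greg_num_eq_0[of 1 k] by (cases k) (simp_all add: ecoeff_def)
next
  case (Suc n)
  have "ecoeff (H (Suc n)) k = ecoeff (H n) (Suc k) + (2 * int n - 1 + 2 * int k) * ecoeff (H n) k
          + int k * (int n - 1 + int k - 1) * ecoeff (H n) (k - 1)"
    unfolding H_Suc[OF Suc.hyps] ecoeff_recurrence_step ..
  then show ?case
    by (simp add: Suc.IH greg_num_Suc_int[OF Suc.hyps] algebra_simps)
qed

lemma ecoeff_G:
  assumes "n \<ge> 1"
  shows "ecoeff (G n) k = int (rooted_greg_num n k)"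
  using assms
proof (induction n arbitrary: k rule: nat_induct_at_least)
  case base
  have "greg_num 1 k = 0" "greg_num 1 (k - 1) * (k - 1) = 0" if "k \<ge> 1"
    using that greg_num_eq_0[of 1 k] greg_num_eq_0[of 1 "k - 1"] by (cases "k = 1"; simp)+
  then show ?case
    using greg_num_1_0 by (cases k) (auto simp: ecoeff_def rooted_greg_num_def)
next
  case (Suc n)
  have "ecoeff (G (Suc n)) k = ecoeff (G n) (Suc k) + (2 * int n + 2 * int k) * ecoeff (G n) k
          + int k * (int n + int k - 1) * ecoeff (G n) (k - 1)"
    unfolding G_Suc[OF Suc.hyps] ecoeff_recurrence_step ..
  also have "\<dots> = int (rooted_greg_num (Suc n) k)"
    unfolding Suc.IH rooted_greg_num_int[OF Suc.hyps] rooted_greg_num_int[of "Suc n", simplified]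
      greg_num_Suc_int[OF Suc.hyps]
    by (cases k) (simp_all add: algebra_simps)
  finally show ?case .
qed

section \<open>Counting orbits of a free action of symmetric groups\<close>

definition perm_orbit_rel ::
    "(nat \<times> 'b) set \<Rightarrow> (nat \<Rightarrow> 'c set) \<Rightarrow> (('c \<Rightarrow> 'c) \<Rightarrow> 'b \<Rightarrow> 'b) \<Rightarrow> ((nat \<times> 'b) \<times> (nat \<times> 'b)) set"
  where "perm_orbit_rel X U act =
    {((k,x),(k',y)). (k,x) \<in> X \<and> k' = k \<and> (\<exists>p. p permutes U k \<and> y = act p x)}"

locale free_perm_action =
  fixes X :: "(nat \<times> 'b) set" and U :: "nat \<Rightarrow> 'c set" and act :: "('c \<Rightarrow> 'c) \<Rightarrow> 'b \<Rightarrow> 'b"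
  assumes finite_X: "finite X"
    and finite_U: "finite (U k)"
    and card_U: "card (U k) = k"
    and act_closed: "(k,x) \<in> X \<Longrightarrow> p permutes U k \<Longrightarrow> (k, act p x) \<in> X"
    and act_id: "(k,x) \<in> X \<Longrightarrow> act id x = x"
    and act_comp: "(k,x) \<in> X \<Longrightarrow> p permutes U k \<Longrightarrow> q permutes U k \<Longrightarrow> act (p \<circ> q) x = act p (act q x)"
    and act_free: "(k,x) \<in> X \<Longrightarrow> p permutes U k \<Longrightarrow> act p x = x \<Longrightarrow> p = id"
begin

abbreviation "R \<equiv> perm_orbit_rel X U act"

lemma act_inv:
  assumes x: "(k,x) \<in> X" and p: "p permutes U k"
  shows "act (inv p) (act p x) = x"
  using act_comp[OF x permutes_inv[OF p] p] permutes_inv_o(2)[OF p] act_id[OF x] by simp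

lemma equiv_perm_orbit_rel: "equiv X R"
proof (rule equivI)
  show "R \<subseteq> X \<times> X"
    using act_closed by (auto simp: perm_orbit_rel_def)
  show "refl_on X R"
    using act_id by (auto simp: refl_on_def perm_orbit_rel_def intro!: exI[of _ id])
  show "sym R"
  proof (rule symI)
    fix a b assume "(a,b) \<in> R"
    then obtain k x p where "a = (k,x)" "b = (k, act p x)" "(k,x) \<in> X" "p permutes U k"
      by (auto simp: perm_orbit_rel_def)
    then show "(b,a) \<in> R"
      using act_closed act_inv permutes_inv by (fastforce simp: perm_orbit_rel_def)
  qed
  show "trans R"
  proof (rule transI)
    fix a b c assume "(a,b) \<in> R" "(b,c) \<in> R"
    then obtain k x p q where "a = (k,x)" "b = (k, act p x)" "c = (k, act q (act p x))"
      and "(k,x) \<in> X" "p permutes U k" "q permutes U k"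
      by (auto simp: perm_orbit_rel_def)
    then show "(a,c) \<in> R"
      using act_comp permutes_compose by (fastforce simp: perm_orbit_rel_def)
  qed
qed

lemma perm_orbit_rel_class:
  "(k,x) \<in> X \<Longrightarrow> R``{(k,x)} = (\<lambda>p. (k, act p x)) ` {p. p permutes U k}"
  by (auto simp: perm_orbit_rel_def)

lemma card_perm_orbit:
  assumes x: "(k,x) \<in> X"
  shows "card (R``{(k,x)}) = fact k"
proof -
  have "inj_on (\<lambda>p. act p x) {p. p permutes U k}"
  proof (rule inj_onI)
    fix p q assume "p \<in> {p. p permutes U k}" "q \<in> {p. p permutes U k}" and e: "act p x = act q x"
    then have p: "p permutes U k" and q: "q permutes U k"
      by auto
    have "act (inv q \<circ> p) x = x"
      using act_comp[OF x permutes_inv[OF q] p] e act_inv[OF x q] by simp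
    then have "inv q \<circ> p = id"
      using act_free[OF x permutes_compose[OF p permutes_inv[OF q]]] by simp
    then have "q \<circ> (inv q \<circ> p) = q"
      by simp
    then show "p = q"
      using permutes_inv_o(1)[OF q] by (simp add: o_assoc)
  qed
  then have "inj_on (\<lambda>p. (k, act p x)) {p. p permutes U k}"
    by (auto simp: inj_on_def)
  then show ?thesis
    using perm_orbit_rel_class[OF x] card_permutations[OF card_U finite_U] by (simp add: card_image)
qed

lemma unl_perm_orbit:
  assumes "(k,x) \<in> X"
  shows "unl (R``{(k,x)}) = k"
proof -
  have "(k, act id x) \<in> R``{(k,x)}"
    using perm_orbit_rel_class[OF assms] by auto
  then have "fst ` (R``{(k,x)}) = {k}"
    using perm_orbit_rel_class[OF assms] by force
  then show ?thesis
    by (simp add: unl_def)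
qed

lemma finite_perm_orbits: "finite (X // R)"
proof -
  have "X // R \<subseteq> Pow X"
    using in_quotient_imp_subset[OF equiv_perm_orbit_rel] by auto
  then show ?thesis
    using finite_X finite_subset by blast
qed

lemma perm_orbit_cases:
  assumes "\<Gamma> \<in> X // R"
  obtains k x where "(k,x) \<in> X" and "\<Gamma> = R``{(k,x)}"
  using assms by (auto elim: quotientE)

lemma Union_perm_orbits_unl: "\<Union>{\<Gamma> \<in> X // R. unl \<Gamma> = k} = {z \<in> X. fst z = k}"
proof
  show "\<Union>{\<Gamma> \<in> X // R. unl \<Gamma> = k} \<subseteq> {z \<in> X. fst z = k}"
  proof
    fix z assume "z \<in> \<Union>{\<Gamma> \<in> X // R. unl \<Gamma> = k}"
    then obtain \<Gamma> where \<Gamma>: "\<Gamma> \<in> X // R" "unl \<Gamma> = k" "z \<in> \<Gamma>"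
      by blast
    obtain k' x where x: "(k',x) \<in> X" and \<Gamma>_eq: "\<Gamma> = R``{(k',x)}"
      using \<Gamma>(1) by (rule perm_orbit_cases)
    have "z \<in> X"
      using \<Gamma> in_quotient_imp_subset[OF equiv_perm_orbit_rel] by blast
    moreover have "fst z = k'"
      using \<Gamma>(3) perm_orbit_rel_class[OF x] \<Gamma>_eq by auto
    moreover have "k' = k"
      using \<Gamma>(2) unl_perm_orbit[OF x] \<Gamma>_eq by simp
    ultimately show "z \<in> {z \<in> X. fst z = k}"
      by simp
  qed
  show "{z \<in> X. fst z = k} \<subseteq> \<Union>{\<Gamma> \<in> X // R. unl \<Gamma> = k}"
  proof
    fix z assume "z \<in> {z \<in> X. fst z = k}"
    then obtain x where z: "z = (k,x)" "(k,x) \<in> X"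
      by (cases z) auto
    then have "R``{z} \<in> {\<Gamma> \<in> X // R. unl \<Gamma> = k}"
      using unl_perm_orbit quotientI[of z X R] by auto
    moreover have "z \<in> R``{z}"
      using equiv_class_self[OF equiv_perm_orbit_rel] z by auto
    ultimately show "z \<in> \<Union>{\<Gamma> \<in> X // R. unl \<Gamma> = k}"
      by blast
  qed
qed

text \<open>The orbits with \<open>unl = k\<close> partition \<open>{z \<in> X. fst z = k}\<close> into blocks of size \<open>k!\<close>.\<close>

lemma card_perm_orbits_unl:
  "card {\<Gamma> \<in> X // R. unl \<Gamma> = k} * fact k = card {x. (k,x) \<in> X}"
proof -
  let ?C = "{\<Gamma> \<in> X // R. unl \<Gamma> = k}"
  have "card (\<Union>?C) = (\<Sum>\<Gamma>\<in>?C. card \<Gamma>)"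
  proof (rule card_Union_disjoint)
    show "pairwise disjnt ?C"
      using quotient_disj[OF equiv_perm_orbit_rel] by (auto simp: pairwise_def disjnt_def)
    show "finite \<Gamma>" if "\<Gamma> \<in> ?C" for \<Gamma>
      using that in_quotient_imp_subset[OF equiv_perm_orbit_rel] finite_X finite_subset by blast
  qed
  moreover have "card \<Gamma> = fact k" if "\<Gamma> \<in> ?C" for \<Gamma>
    using that by (auto elim!: perm_orbit_cases simp: unl_perm_orbit card_perm_orbit)
  moreover have "{z \<in> X. fst z = k} = Pair k ` {x. (k,x) \<in> X}"
    by auto
  moreover have "inj_on (Pair k) {x. (k,x) \<in> X}"
    by (simp add: inj_on_def)
  ultimately show ?thesis
    using Union_perm_orbits_unl by (simp add: card_image)
qed

end

section \<open>Automorphisms of Greg trees\<close>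

lemma edge_image_del_vertex:
  assumes inj: "inj_on g V" and E: "E \<subseteq> Pow V" and l: "l \<in> V" "g l = l"
  shows "edge_image g (del_vertex l E) = del_vertex l (edge_image g E)"
proof -
  have "l \<in> g ` e \<longleftrightarrow> l \<in> e" if "e \<in> E" for e
  proof
    assume "l \<in> g ` e"
    then obtain x where "x \<in> e" "g x = g l"
      using l(2) by auto
    then show "l \<in> e"
      using inj_onD[OF inj] E that l(1) by blast
  qed (use l(2) in force)
  then show ?thesis
    by (auto simp: edge_image_def del_vertex_def)
qed

lemma automorphism_fixes_leaf_nbr:
  assumes inj: "inj_on g V" and im: "edge_image g E = E" and N: "nbrs E l = {v}"
    and V: "l \<in> V" "v \<in> V" and gl: "g l = l"
  shows "g v = v"
proof -
  have "{l,v} \<in> E"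
    using N by (auto simp: nbrs_def adj_def)
  then have "g ` {l,v} \<in> E"
    using im unfolding edge_image_def by blast
  moreover have "g v \<noteq> l"
    using inj_onD[OF inj, of v l] gl V N nbrs_not_self[of l E] by auto
  ultimately have "g v \<in> nbrs E l"
    using gl by (auto simp: nbrs_def adj_def)
  then show ?thesis
    using N by simp
qed

lemma deg_del_leaf:
  assumes T: "is_tree V E" and N: "nbrs E l = {v}" and w: "w \<noteq> l" "w \<noteq> v"
  shows "deg (del_vertex l E) w = deg E w"
proof -
  have "l \<notin> nbrs E w"
    using N w adj_sym by (auto simp: nbrs_def)
  then have "nbrs (del_vertex l E) w = nbrs E w"
    using nbrs_del_vertex[of w l E] w by auto
  then show ?thesis
    using tree_deg_eq[OF T] deg_eq_card_nbrs[OF simple_edges_del_vertex[OF tree_simple_edges[OF T]]]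
    by simp
qed

text \<open>Removing a leaf fixed by the automorphism, whose neighbour is then fixed as well, reduces
  to a smaller tree.\<close>

lemma tree_automorphism_fixing_leaves:
  assumes "is_tree V E" and "bij_betw g V V" and "edge_image g E = E"
    and "\<forall>v\<in>V. deg E v \<le> 1 \<longrightarrow> g v = v"
  shows "\<forall>v\<in>V. g v = v"
  using assms
proof (induction "card V" arbitrary: V E rule: less_induct)
  case less
  note T = less.prems(1) and bij = less.prems(2) and im = less.prems(3) and leaves = less.prems(4)
  have inj: "inj_on g V"
    using bij by (auto simp: bij_betw_def)
  show ?case
  proof (cases "card V \<ge> 2")
    case False
    then have "card V = 1"
      using tree_card_pos[OF T] by simp
    then obtain v where "V = {v}"
      by (auto simp: card_1_singleton_iff)
    then show ?thesis
      using bij by (auto simp: bij_betw_def)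
  next
    case True
    obtain l where lV: "l \<in> V" and "deg E l = 1"
      using tree_has_leaf[OF T True] by blast
    then obtain v where N: "nbrs E l = {v}"
      using tree_deg_eq[OF T] by (auto simp: card_1_singleton_iff)
    have gl: "g l = l"
      using leaves lV \<open>deg E l = 1\<close> by auto
    have vV: "v \<in> V"
      using N nbrs_subset[OF tree_simple_edges[OF T]] by auto
    have "\<forall>w\<in>V - {l}. g w = w"
    proof (rule less.hyps)
      show "card (V - {l}) < card V"
        by (rule card_Diff1_less[OF tree_finite[OF T] lV])
      show "is_tree (V - {l}) (del_vertex l E)"
        by (rule is_tree_del_leaf[OF T lV N])
      show "bij_betw g (V - {l}) (V - {l})"
        using bij gl lV by (simp add: bij_betw_DiffI)
      show "edge_image g (del_vertex l E) = del_vertex l E"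
        using edge_image_del_vertex[OF inj simple_edges_subset_Pow[OF tree_simple_edges[OF T]] lV gl] im
        by simp
      show "\<forall>w\<in>V - {l}. deg (del_vertex l E) w \<le> 1 \<longrightarrow> g w = w"
        using leaves deg_del_leaf[OF T N] automorphism_fixes_leaf_nbr[OF inj im N lV vV gl]
        by (metis Diff_iff singletonI)
    qed
    then show ?thesis
      using gl by auto
  qed
qed

text \<open>All leaves of a Greg tree are labelled, so only the identity fixes the labels and the edges.\<close>

lemma greg_automorphism_eq_id:
  assumes E: "E \<in> greg_trees_on L V" and p: "p permutes U" "U \<subseteq> V"
    and fix_L: "\<forall>v\<in>L. p v = v" and im: "edge_image p E = E"
  shows "p = id"
proof
  fix x
  have T: "is_tree V E"
    using E by (simp add: greg_trees_on_def)
  have "\<forall>v\<in>V. deg E v \<le> 1 \<longrightarrow> p v = v"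
    using E fix_L by (force simp: greg_trees_on_def)
  then have "\<forall>v\<in>V. p v = v"
    using tree_automorphism_fixing_leaves[OF T _ im] permutes_imp_bij[OF permutes_subset[OF p]] by blast
  moreover have "x \<notin> V \<Longrightarrow> p x = x"
    using p by (meson permutes_not_in subsetD)
  ultimately show "p x = id x"
    by (cases "x \<in> V") auto
qed

section \<open>Isomorphism classes as orbits\<close>

lemma verts_diff_labels: "verts n k - {0..<n} = {n..<n+k}"
  by (auto simp: verts_def)

lemma labels_subset_verts: "{0..<n} \<subseteq> verts n k"
  by (auto simp: verts_def)

lemma finite_verts: "finite (verts n k)"
  by (simp add: verts_def)

lemma greg_raw_iff: "(k,E) \<in> greg_raw n \<longleftrightarrow> E \<in> greg_trees_on {0..<n} (verts n k)"
  unfolding greg_raw_def greg_trees_on_def verts_diff_labels[symmetric] by auto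

lemma rgreg_raw_iff: "(k,E,r) \<in> rgreg_raw n \<longleftrightarrow> (E,r) \<in> rooted_greg_trees_on {0..<n} (verts n k)"
proof -
  have "(\<forall>v\<in>{n..<n+k}. v \<noteq> r \<longrightarrow> deg E v \<ge> 3) \<longleftrightarrow> (\<forall>v\<in>verts n k - insert r {0..<n}. deg E v \<ge> 3)"
    by (auto simp: verts_def)
  moreover have "r \<in> verts n k \<Longrightarrow> (n \<le> r \<longrightarrow> 2 \<le> deg E r) \<longleftrightarrow> (r \<in> {0..<n} \<or> 2 \<le> deg E r)"
    by auto
  ultimately show ?thesis
    unfolding rgreg_raw_def rooted_greg_trees_on_def greg_trees_on_def by auto
qed

lemma permutes_unlabelled_bij: "p permutes {n..<n+k} \<Longrightarrow> bij_betw p (verts n k) (verts n k)"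
  by (rule permutes_imp_bij, rule permutes_subset) (auto simp: verts_def)

lemma permutes_unlabelled_fixes_labels:
  fixes n k x :: nat
  shows "p permutes {n..<n+k} \<Longrightarrow> x < n \<Longrightarrow> p x = x"
  by (erule permutes_not_in) simp

lemma permutes_unlabelled_image_labels:
  fixes n k :: nat
  shows "p permutes {n..<n+k} \<Longrightarrow> p ` {0..<n} = {0..<n}"
  using permutes_unlabelled_fixes_labels by force

lemma lab_iso_imp_permutes:
  assumes E: "E \<subseteq> Pow (verts n k)" and iso: "lab_iso n k E E' f"
  obtains p where "p permutes {n..<n+k}" and "E' = edge_image p E" and "\<forall>x\<in>verts n k. p x = f x"
proof -
  have bij: "bij_betw f (verts n k) (verts n k)" and fix_L: "\<forall>i<n. f i = i"
    and E': "E' = (\<lambda>e. f ` e) ` E"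
    using iso by (auto simp: lab_iso_def)
  define U where "U = {n..<n+k}"
  define p where "p x = (if x \<in> U then f x else x)" for x
  have inj: "inj_on f (verts n k)" and im: "f ` verts n k = verts n k"
    using bij by (auto simp: bij_betw_def)
  have "f ` {0..<n} = {0..<n}"
    using fix_L by force
  then have "f ` U = U"
    unfolding U_def verts_diff_labels[symmetric]
    using inj_on_image_set_diff[OF inj, of "verts n k" "{0..<n}"] im labels_subset_verts by simp
  moreover have "inj_on f U"
    using inj by (rule inj_on_subset) (auto simp: U_def verts_def)
  ultimately have "bij_betw f U U"
    by (simp add: bij_betw_def)
  then have "bij_betw p U U"
    by (rule bij_betw_cong[THEN iffD1, rotated]) (simp add: p_def)
  then have perm: "p permutes U"
    by (rule bij_imp_permutes) (simp add: p_def)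
  have agree: "\<forall>x\<in>verts n k. p x = f x"
    using fix_L by (auto simp: p_def U_def verts_def)
  have "E' = edge_image p E"
    unfolding E' edge_image_def
  proof (rule image_cong[OF refl])
    fix e assume "e \<in> E"
    then have "e \<subseteq> verts n k"
      using E by auto
    then show "f ` e = p ` e"
      using agree by (auto intro!: image_cong)
  qed
  then show ?thesis
    using that perm agree by (auto simp: U_def)
qed

lemma lab_iso_permutes: "p permutes {n..<n+k} \<Longrightarrow> lab_iso n k E (edge_image p E) p"
  unfolding lab_iso_def edge_image_def
  using permutes_unlabelled_bij permutes_unlabelled_fixes_labels by auto

lemma greg_raw_permute:
  assumes "(k,E) \<in> greg_raw n" and p: "p permutes {n..<n+k}"
  shows "(k, edge_image p E) \<in> greg_raw n"
proof -
  have "E \<in> greg_trees_on {0..<n} (verts n k)"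
    using assms(1) by (simp add: greg_raw_iff)
  then have "edge_image p E \<in> greg_trees_on (p ` {0..<n}) (verts n k)"
    by (rule edge_image_greg_trees_on[OF permutes_unlabelled_bij[OF p] _ labels_subset_verts])
  then show ?thesis
    by (simp add: greg_raw_iff permutes_unlabelled_image_labels[OF p])
qed

lemma rgreg_raw_permute:
  assumes "(k,E,r) \<in> rgreg_raw n" and p: "p permutes {n..<n+k}"
  shows "(k, edge_image p E, p r) \<in> rgreg_raw n"
proof -
  have rV: "r \<in> verts n k" and E: "E \<in> greg_trees_on (insert r {0..<n}) (verts n k)"
    and root: "r \<in> {0..<n} \<or> deg E r \<ge> 2"
    using assms(1) by (auto simp: rgreg_raw_iff rooted_greg_trees_on_def)
  have bij: "bij_betw p (verts n k) (verts n k)"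
    using permutes_unlabelled_bij[OF p] .
  have "insert r {0..<n} \<subseteq> verts n k"
    using rV labels_subset_verts by simp
  then have "edge_image p E \<in> greg_trees_on (p ` insert r {0..<n}) (verts n k)"
    by (rule edge_image_greg_trees_on[OF bij E])
  then have "edge_image p E \<in> greg_trees_on (insert (p r) {0..<n}) (verts n k)"
    by (simp add: permutes_unlabelled_image_labels[OF p])
  moreover have "p r \<in> verts n k"
    using bij rV by (auto simp: bij_betw_def)
  moreover have "p r \<in> {0..<n} \<or> deg (edge_image p E) (p r) \<ge> 2"
  proof (cases "r < n")
    case True
    then show ?thesis
      using permutes_unlabelled_fixes_labels[OF p] by simp
  next
    case False
    have "deg (edge_image p E) (p r) = deg E r"
      using E rV deg_edge_image[OF bij_betw_imp_inj_on[OF bij] tree_simple_edges]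
      by (simp add: greg_trees_on_def)
    then show ?thesis
      using root False by simp
  qed
  ultimately show ?thesis
    by (simp add: rgreg_raw_iff rooted_greg_trees_on_def)
qed

lemma card_unlabelled_le_Suc:
  assumes E: "E \<in> greg_trees_on L V" and LV: "L \<subseteq> V"
  shows "card (V - L) \<le> card L + 1"
proof (cases "card V \<ge> 2")
  case True
  then show ?thesis
    using card_unlabelled_le[OF assms] by simp
next
  case False
  then have "card (V - L) \<le> 1"
    using E card_mono[of V "V - L"] by (force simp: greg_trees_on_def is_tree_iff)
  then show ?thesis
    by simp
qed

lemma greg_raw_bound: "(k,E) \<in> greg_raw n \<Longrightarrow> k \<le> n + 1"
  using card_unlabelled_le_Suc[of E "{0..<n}" "verts n k"] labels_subset_verts
  by (simp add: greg_raw_iff verts_diff_labels)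

lemma rgreg_raw_bound:
  assumes "(k,E,r) \<in> rgreg_raw n"
  shows "k \<le> n + 3"
proof -
  let ?L = "insert r {0..<n}"
  have rV: "r \<in> verts n k" and E: "E \<in> greg_trees_on ?L (verts n k)"
    using assms by (auto simp: rgreg_raw_iff rooted_greg_trees_on_def)
  have "card (verts n k - ?L) \<le> card ?L + 1"
    using card_unlabelled_le_Suc[OF E] rV labels_subset_verts by simp
  moreover have "card ?L \<le> n + 1"
    by (simp add: card_insert_if)
  moreover have "card (verts n k - {0..<n}) \<le> card (insert r (verts n k - ?L))"
    by (rule card_mono) (auto simp: finite_verts)
  moreover have "card (insert r (verts n k - ?L)) \<le> card (verts n k - ?L) + 1"
    by (simp add: card_insert_if finite_verts)
  ultimately show ?thesis
    by (simp add: verts_diff_labels)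
qed

lemma finite_greg_raw: "finite (greg_raw n)"
proof (rule finite_subset)
  show "greg_raw n \<subseteq> (SIGMA k:{..n+1}. Pow (Pow (verts n k)))"
    using greg_raw_bound simple_edges_subset_Pow tree_simple_edges
    by (fastforce simp: greg_raw_iff greg_trees_on_def)
qed (simp add: finite_verts)

lemma finite_rgreg_raw: "finite (rgreg_raw n)"
proof (rule finite_subset)
  show "rgreg_raw n \<subseteq> (SIGMA k:{..n+3}. Pow (Pow (verts n k)) \<times> verts n k)"
    using rgreg_raw_bound simple_edges_subset_Pow tree_simple_edges
    by (fastforce simp: rgreg_raw_iff rooted_greg_trees_on_def greg_trees_on_def)
qed (simp add: finite_verts)

lemma unlabelled_subset_verts: "{n..<n+k} \<subseteq> verts n k"
  by (auto simp: verts_def)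

lemma free_perm_action_greg: "free_perm_action (greg_raw n) (\<lambda>k. {n..<n+k}) edge_image"
proof
  fix k E p
  assume "(k,E) \<in> greg_raw n" and p: "p permutes {n..<n+k}" and "edge_image p E = E"
  then show "p = id"
    using greg_automorphism_eq_id[OF _ p unlabelled_subset_verts] permutes_unlabelled_fixes_labels[OF p]
    by (simp add: greg_raw_iff)
qed (simp_all add: finite_greg_raw greg_raw_permute edge_image_id edge_image_comp)

lemma free_perm_action_rgreg:
  "free_perm_action (rgreg_raw n) (\<lambda>k. {n..<n+k}) (\<lambda>p. map_prod (edge_image p) p)"
proof
  fix k x p
  assume x: "(k,x) \<in> rgreg_raw n" and p: "p permutes {n..<n+k}"
    and fixed: "map_prod (edge_image p) p x = x"
  obtain E r where x_eq: "x = (E,r)"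
    by (cases x)
  have "E \<in> greg_trees_on (insert r {0..<n}) (verts n k)"
    using x x_eq by (simp add: rgreg_raw_iff rooted_greg_trees_on_def)
  moreover have "\<forall>v\<in>insert r {0..<n}. p v = v" and "edge_image p E = E"
    using fixed x_eq permutes_unlabelled_fixes_labels[OF p] by auto
  ultimately show "p = id"
    using greg_automorphism_eq_id[OF _ p unlabelled_subset_verts] by blast
qed (auto simp: finite_rgreg_raw rgreg_raw_permute edge_image_id edge_image_comp)

lemma greg_rel_eq_perm_orbit_rel:
  "greg_rel n = perm_orbit_rel (greg_raw n) (\<lambda>k. {n..<n+k}) edge_image"
proof (intro set_eqI iffI)
  fix z assume "z \<in> greg_rel n"
  then obtain k E E' f where z: "z = ((k,E),(k,E'))" "(k,E) \<in> greg_raw n" "lab_iso n k E E' f"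
    by (auto simp: greg_rel_def)
  moreover have "E \<subseteq> Pow (verts n k)"
    using z(2) simple_edges_subset_Pow tree_simple_edges by (auto simp: greg_raw_iff greg_trees_on_def)
  ultimately show "z \<in> perm_orbit_rel (greg_raw n) (\<lambda>k. {n..<n+k}) edge_image"
    by (auto simp: perm_orbit_rel_def elim: lab_iso_imp_permutes)
next
  fix z assume "z \<in> perm_orbit_rel (greg_raw n) (\<lambda>k. {n..<n+k}) edge_image"
  then obtain k E p where "z = ((k,E),(k,edge_image p E))" "(k,E) \<in> greg_raw n"
      and p: "p permutes {n..<n+k}"
    by (auto simp: perm_orbit_rel_def)
  then show "z \<in> greg_rel n"
    using greg_raw_permute[OF _ p] lab_iso_permutes[OF p] by (auto simp: greg_rel_def)
qed

lemma rgreg_rel_eq_perm_orbit_rel: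
  "rgreg_rel n = perm_orbit_rel (rgreg_raw n) (\<lambda>k. {n..<n+k}) (\<lambda>p. map_prod (edge_image p) p)"
proof (intro set_eqI iffI)
  fix z assume "z \<in> rgreg_rel n"
  then obtain k E r E' f where z: "z = ((k,E,r),(k,E',f r))" "(k,E,r) \<in> rgreg_raw n" "lab_iso n k E E' f"
    by (auto simp: rgreg_rel_def)
  moreover have "E \<subseteq> Pow (verts n k)" "r \<in> verts n k"
    using z(2) simple_edges_subset_Pow tree_simple_edges
    by (auto simp: rgreg_raw_iff rooted_greg_trees_on_def greg_trees_on_def)
  ultimately show "z \<in> perm_orbit_rel (rgreg_raw n) (\<lambda>k. {n..<n+k}) (\<lambda>p. map_prod (edge_image p) p)"
    by (auto simp: perm_orbit_rel_def elim!: lab_iso_imp_permutes)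
next
  fix z assume "z \<in> perm_orbit_rel (rgreg_raw n) (\<lambda>k. {n..<n+k}) (\<lambda>p. map_prod (edge_image p) p)"
  then obtain k E r p where "z = ((k,E,r),(k,edge_image p E, p r))" "(k,E,r) \<in> rgreg_raw n"
      and p: "p permutes {n..<n+k}"
    by (auto simp: perm_orbit_rel_def)
  then show "z \<in> rgreg_rel n"
    using rgreg_raw_permute[OF _ p] lab_iso_permutes[OF p] by (auto simp: rgreg_rel_def)
qed


lemma card_greg_trees_unl: "card {\<Gamma> \<in> greg_trees n. unl \<Gamma> = k} * fact k = greg_num n k"
proof -
  have "{E. (k,E) \<in> greg_raw n} = greg_trees_on {0..<n} {0..<n+k}"
    by (auto simp: greg_raw_iff verts_def)
  then show ?thesis
    using free_perm_action.card_perm_orbits_unl[OF free_perm_action_greg, of n k]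
    by (simp add: greg_trees_def greg_rel_eq_perm_orbit_rel greg_num_def)
qed

lemma card_rooted_greg_trees_unl:
  "card {\<Gamma> \<in> rooted_greg_trees n. unl \<Gamma> = k} * fact k = rooted_greg_num n k"
proof -
  have "{x. (k,x) \<in> rgreg_raw n} = rooted_greg_trees_on {0..<n} (verts n k)"
    by (auto simp: rgreg_raw_iff)
  moreover have "card (rooted_greg_trees_on {0..<n} (verts n k)) = rooted_greg_num n k"
    using card_rooted_greg_trees_on_eq[OF finite_verts labels_subset_verts] by (simp add: verts_diff_labels)
  ultimately show ?thesis
    using free_perm_action.card_perm_orbits_unl[OF free_perm_action_rgreg, of n k]
    by (simp add: rooted_greg_trees_def rgreg_rel_eq_perm_orbit_rel)
qed

lemma finite_greg_trees: "finite (greg_trees n)"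
  using free_perm_action.finite_perm_orbits[OF free_perm_action_greg]
  by (simp add: greg_trees_def greg_rel_eq_perm_orbit_rel)

lemma finite_rooted_greg_trees: "finite (rooted_greg_trees n)"
  using free_perm_action.finite_perm_orbits[OF free_perm_action_rgreg]
  by (simp add: rooted_greg_trees_def rgreg_rel_eq_perm_orbit_rel)

lemma eq_sum_monom_unl:
  fixes P :: "int poly" and Q :: "(nat \<times> 'a) set set"
  assumes "finite Q" and "\<And>k. ecoeff P k = int (card {\<Gamma> \<in> Q. unl \<Gamma> = k} * fact k)"
  shows "P = (\<Sum>\<Gamma>\<in>Q. monom 1 (unl \<Gamma>))"
proof (rule poly_eqI)
  fix k
  have "coeff (\<Sum>\<Gamma>\<in>Q. monom 1 (unl \<Gamma>)) k = int (card {\<Gamma> \<in> Q. unl \<Gamma> = k})"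
    using sum.inter_filter[OF assms(1), of "\<lambda>_. 1::int" "\<lambda>\<Gamma>. unl \<Gamma> = k"]
    by (simp add: coeff_sum coeff_monom if_distrib[of int] sum.If_cases[OF assms(1)])
  moreover have "coeff P k * fact k = int (card {\<Gamma> \<in> Q. unl \<Gamma> = k}) * fact k"
    using assms(2)[of k] by (simp add: ecoeff_def)
  ultimately show "coeff P k = coeff (\<Sum>\<Gamma>\<in>Q. monom 1 (unl \<Gamma>)) k"
    by simp
qed

theorem mainTheorem2:
  fixes n :: nat
  assumes "n \<ge> 1"
  shows "G n = (\<Sum>\<Gamma>\<in>rooted_greg_trees n. monom 1 (unl \<Gamma>)) \<and>
         H n = (\<Sum>\<Gamma>\<in>greg_trees n. monom 1 (unl \<Gamma>))"
proof
  show "G n = (\<Sum>\<Gamma>\<in>rooted_greg_trees n. monom 1 (unl \<Gamma>))"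
    using finite_rooted_greg_trees
    by (rule eq_sum_monom_unl) (simp add: ecoeff_G[OF assms] card_rooted_greg_trees_unl)
  show "H n = (\<Sum>\<Gamma>\<in>greg_trees n. monom 1 (unl \<Gamma>))"
    using finite_greg_trees
    by (rule eq_sum_monom_unl) (simp add: ecoeff_H[OF assms] card_greg_trees_unl)
qed

end
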